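(* The center of $\mathcal W_\xi$ is generated by $z^{\pm1}$, $x^{\pm N}$ and $y^{\pm N}$, and $\phi$ maps the center of $\mathcal U_\xi$ into the center of $\mathcal W_\xi$. Explicitly, \[ \phi(K^N)=x^N,\qquad \phi(E^N)=y^N(x^N-z^N),\qquad \phi(F^N)=y^{-N}(1-z^{-N}x^{-N}). \]
   Context: $N\ge2$ is an integer and $\xi=e^{\pi i/N}$. $\mathcal U_\xi$ is the $\mathbb C$-algebra generated by $K^{\pm1},E,F$ with $KE=\xi^2EK$, $KF=\xi^{-2}FK$, $[E,F]=(\xi-\xi^{-1})(K-K^{-1})$. $\mathcal W_\xi$ is the $\mathbb C$-algebra generated by invertible $x,y$ and a central invertible $z$ with $xy=\xi^2yx$. $\phi:\mathcal U_\xi\to\mathcal W_\xi$ is the algebra homomorphism with $\phi(K)=x$, $\phi(E)=\xi y(z-x)$, $\phi(F)=y^{-1}(1-z^{-1}x^{-1})$. *)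

theory Defs
  imports Complex_Main
begin

text \<open>An element of the free associative C-algebra on generators of type 'g is a
finitely supported function from words (lists of generators) to C.  An algebra given
by generators and relations is represented as the free algebra modulo the two-sided
ideal generated by the relations; equalities in the quotient are expressed as
"difference lies in the ideal".\<close>

type_synonym 'g fa = "'g list \<Rightarrow> complex"

definition fa :: "'g fa \<Rightarrow> bool" where
  "fa p \<longleftrightarrow> finite {w. p w \<noteq> 0}"

definition fa_zero :: "'g fa" where "fa_zero = (\<lambda>w. 0)"
definition fa_one :: "'g fa" where "fa_one = (\<lambda>w. if w = [] then 1 else 0)"
definition fa_gen :: "'g \<Rightarrow> 'g fa" where "fa_gen g = (\<lambda>w. if w = [g] then 1 else 0)"
definition fa_add :: "'g fa \<Rightarrow> 'g fa \<Rightarrow> 'g fa" where "fa_add p q = (\<lambda>w. p w + q w)"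
definition fa_sub :: "'g fa \<Rightarrow> 'g fa \<Rightarrow> 'g fa" where "fa_sub p q = (\<lambda>w. p w - q w)"
definition fa_smult :: "complex \<Rightarrow> 'g fa \<Rightarrow> 'g fa" where "fa_smult c p = (\<lambda>w. c * p w)"
definition fa_mult :: "'g fa \<Rightarrow> 'g fa \<Rightarrow> 'g fa" where
  "fa_mult p q = (\<lambda>w. \<Sum>(u, v) \<in> {(u, v). u @ v = w}. p u * q v)"

primrec fa_pow :: "'g fa \<Rightarrow> nat \<Rightarrow> 'g fa" where
  "fa_pow p 0 = fa_one"
| "fa_pow p (Suc n) = fa_mult p (fa_pow p n)"

inductive_set fa_ideal :: "'g fa set \<Rightarrow> 'g fa set" for R where
  gen: "r \<in> R \<Longrightarrow> r \<in> fa_ideal R"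
| zero: "fa_zero \<in> fa_ideal R"
| add: "a \<in> fa_ideal R \<Longrightarrow> b \<in> fa_ideal R \<Longrightarrow> fa_add a b \<in> fa_ideal R"
| mult: "a \<in> fa_ideal R \<Longrightarrow> fa u \<Longrightarrow> fa v \<Longrightarrow> fa_mult (fa_mult u a) v \<in> fa_ideal R"

inductive_set fa_subalg :: "'g fa set \<Rightarrow> 'g fa set" for S where
  one: "fa_one \<in> fa_subalg S"
| gen: "s \<in> S \<Longrightarrow> s \<in> fa_subalg S"
| add: "a \<in> fa_subalg S \<Longrightarrow> b \<in> fa_subalg S \<Longrightarrow> fa_add a b \<in> fa_subalg S"
| smult: "a \<in> fa_subalg S \<Longrightarrow> fa_smult c a \<in> fa_subalg S"
| mult: "a \<in> fa_subalg S \<Longrightarrow> b \<in> fa_subalg S \<Longrightarrow> fa_mult a b \<in> fa_subalg S"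

primrec word_eval :: "('g \<Rightarrow> 'h fa) \<Rightarrow> 'g list \<Rightarrow> 'h fa" where
  "word_eval f [] = fa_one"
| "word_eval f (g # w) = fa_mult (f g) (word_eval f w)"

definition fa_hom :: "('g \<Rightarrow> 'h fa) \<Rightarrow> 'g fa \<Rightarrow> 'h fa" where
  "fa_hom f p = (\<lambda>v. \<Sum>w \<in> {w. p w \<noteq> 0}. p w * word_eval f w v)"

definition quot_central :: "'g fa set \<Rightarrow> 'g fa \<Rightarrow> bool" where
  "quot_central I u \<longleftrightarrow> fa u \<and> (\<forall>v. fa v \<longrightarrow> fa_sub (fa_mult u v) (fa_mult v u) \<in> I)"

definition xi :: "nat \<Rightarrow> complex" where "xi N = exp (pi * \<i> / of_nat N)"

datatype ugen = UK | UKi | UE | UF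
datatype wgen = WX | WXi | WY | WYi | WZ | WZi

definition U_rels :: "nat \<Rightarrow> ugen fa set" where
  "U_rels N = (let q = xi N; K = fa_gen UK; Ki = fa_gen UKi; E = fa_gen UE; F = fa_gen UF in
     { fa_sub (fa_mult K Ki) fa_one, fa_sub (fa_mult Ki K) fa_one,
       fa_sub (fa_mult K E) (fa_smult (q^2) (fa_mult E K)),
       fa_sub (fa_mult K F) (fa_smult (inverse (q^2)) (fa_mult F K)),
       fa_sub (fa_sub (fa_mult E F) (fa_mult F E)) (fa_smult (q - inverse q) (fa_sub K Ki)) })"

definition U_ideal :: "nat \<Rightarrow> ugen fa set" where "U_ideal N = fa_ideal (U_rels N)"

definition W_rels :: "nat \<Rightarrow> wgen fa set" where
  "W_rels N = (let q = xi N; x = fa_gen WX; xi' = fa_gen WXi; y = fa_gen WY; yi = fa_gen WYi;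
                   z = fa_gen WZ; zi = fa_gen WZi in
     { fa_sub (fa_mult x xi') fa_one, fa_sub (fa_mult xi' x) fa_one,
       fa_sub (fa_mult y yi) fa_one, fa_sub (fa_mult yi y) fa_one,
       fa_sub (fa_mult z zi) fa_one, fa_sub (fa_mult zi z) fa_one,
       fa_sub (fa_mult x y) (fa_smult (q^2) (fa_mult y x)) }
     \<union> { fa_sub (fa_mult z g) (fa_mult g z) | g. g \<in> {x, xi', y, yi} })"

definition W_ideal :: "nat \<Rightarrow> wgen fa set" where "W_ideal N = fa_ideal (W_rels N)"

definition phi_gen :: "nat \<Rightarrow> ugen \<Rightarrow> wgen fa" where
  "phi_gen N g = (case g of
      UK \<Rightarrow> fa_gen WX
    | UKi \<Rightarrow> fa_gen WXi
    | UE \<Rightarrow> fa_smult (xi N) (fa_mult (fa_gen WY) (fa_sub (fa_gen WZ) (fa_gen WX)))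
    | UF \<Rightarrow> fa_mult (fa_gen WYi) (fa_sub fa_one (fa_mult (fa_gen WZi) (fa_gen WXi))))"

definition phi :: "nat \<Rightarrow> ugen fa \<Rightarrow> wgen fa" where "phi N = fa_hom (phi_gen N)"

end

theory Submission
  imports Defs "HOL-Computational_Algebra.Polynomial" "HOL-Library.Real_Mod"
begin

(* Elements of W are handled through their coefficient functions Z^3 -> C with respect to the
   monomials x^a y^b z^c.  The coefficient function of p is p acting, in the left regular
   representation, on the delta function at 0; it vanishes on the ideal and, since the monomials
   span, only there.  Right multiplication by a generator is another explicit operator on
   coefficient functions, so w is central iff left and right multiplication by each generator
   agree on its coefficients.  Because q = xi^2 is a primitive N-th root of unity, this confines
   the support to NZ x NZ x Z, which is the subalgebra generated by x^(+-N), y^(+-N), z^(+-1).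

   Pulling the representation back along phi shows that phi kills the relations of U and is
   multiplicative modulo the ideal.  So phi maps a central u to an element commuting with
   x = phi K and with y (z - x), a multiple of phi E: the first forces N | b on the support, the
   second forces N | a because z - x is not a zero divisor.  Finally
   phi(E)^N = xi^N y^N prod_(k<N) (z - q^k x), and prod_(k<N) (T - q^k) = T^N - 1. *)

section \<open>The free algebra\<close>

lemma finite_append_splits: "finite {(u, v). u @ v = (w :: 'a list)}"
proof -
  have "{(u, v). u @ v = w} = (\<lambda>i. (take i w, drop i w)) ` {..length w}"
    apply (auto simp: append_eq_conv_conj image_iff)
    subgoal for a
      apply (rule bexI[where x="length a"])
       apply simp
      by (drule arg_cong[where f=length]) auto
    done
  then show ?thesis by simp
qed

lemma fa_mult_assoc: "fa_mult (fa_mult p q) r = fa_mult p (fa_mult q r)"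
proof (rule ext)
  fix w :: "'a list"
  let ?D = "\<lambda>w::'a list. {(u, v). u @ v = w}"
  have "fa_mult (fa_mult p q) r w =
     (\<Sum>x\<in>?D w. \<Sum>y\<in>?D (fst x). p (fst y) * q (snd y) * r (snd x))"
    unfolding fa_mult_def
    by (rule sum.cong) (auto simp: sum_distrib_right case_prod_beta)
  also have "\<dots> = (\<Sum>z\<in>Sigma (?D w) (\<lambda>x. ?D (fst x)).
                     p (fst (snd z)) * q (snd (snd z)) * r (snd (fst z)))"
    by (subst sum.Sigma) (auto simp: finite_append_splits case_prod_beta)
  also have "\<dots> = (\<Sum>z\<in>Sigma (?D w) (\<lambda>x. ?D (snd x)).
                     p (fst (fst z)) * q (fst (snd z)) * r (snd (snd z)))"
    by (rule sum.reindex_bij_witness[where i="\<lambda>((a,t),(b,c)). ((a@b,c),(a,b))"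
                                       and j="\<lambda>((s,c),(a,b)). ((a,b@c),(b,c))"]) auto
  also have "\<dots> = (\<Sum>x\<in>?D w. \<Sum>y\<in>?D (snd x). p (fst x) * q (fst y) * r (snd y))"
    by (subst sum.Sigma) (auto simp: finite_append_splits case_prod_beta)
  also have "\<dots> = fa_mult p (fa_mult q r) w"
    unfolding fa_mult_def
    by (rule sum.cong) (auto simp: sum_distrib_left case_prod_beta mult.assoc)
  finally show "fa_mult (fa_mult p q) r w = fa_mult p (fa_mult q r) w" .
qed

lemma fa_mult_one_left [simp]: "fa_mult fa_one p = p"
proof (rule ext)
  fix w
  have "fa_mult fa_one p w = (\<Sum>x\<in>{(u, v). u @ v = w}. if x = ([], w) then p w else 0)"
    unfolding fa_mult_def fa_one_def by (rule sum.cong) (auto split: if_splits)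
  also have "\<dots> = p w" by (subst sum.delta) (auto simp: finite_append_splits)
  finally show "fa_mult fa_one p w = p w" .
qed

lemma fa_mult_one_right [simp]: "fa_mult p fa_one = p"
proof (rule ext)
  fix w
  have "fa_mult p fa_one w = (\<Sum>x\<in>{(u, v). u @ v = w}. if x = (w, []) then p w else 0)"
    unfolding fa_mult_def fa_one_def by (rule sum.cong) (auto split: if_splits)
  also have "\<dots> = p w" by (subst sum.delta) (auto simp: finite_append_splits)
  finally show "fa_mult p fa_one w = p w" .
qed

lemma fa_mult_add_left: "fa_mult (fa_add p q) r = fa_add (fa_mult p r) (fa_mult q r)"
  unfolding fa_mult_def fa_add_def by (simp add: sum.distrib case_prod_beta distrib_right)

lemma fa_mult_add_right: "fa_mult r (fa_add p q) = fa_add (fa_mult r p) (fa_mult r q)"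
  unfolding fa_mult_def fa_add_def by (simp add: sum.distrib case_prod_beta distrib_left)

lemma fa_mult_sub_left: "fa_mult (fa_sub p q) r = fa_sub (fa_mult p r) (fa_mult q r)"
  unfolding fa_mult_def fa_sub_def by (simp add: sum_subtractf case_prod_beta left_diff_distrib)

lemma fa_mult_sub_right: "fa_mult r (fa_sub p q) = fa_sub (fa_mult r p) (fa_mult r q)"
  unfolding fa_mult_def fa_sub_def by (simp add: sum_subtractf case_prod_beta right_diff_distrib)

lemma fa_mult_smult_left: "fa_mult (fa_smult c p) r = fa_smult c (fa_mult p r)"
  unfolding fa_mult_def fa_smult_def by (simp add: sum_distrib_left case_prod_beta mult.assoc)

lemma fa_mult_smult_right: "fa_mult r (fa_smult c p) = fa_smult c (fa_mult r p)"
  unfolding fa_mult_def fa_smult_def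
  by (simp add: sum_distrib_left case_prod_beta mult.left_commute)

lemma fa_smult_smult [simp]: "fa_smult c (fa_smult d a) = fa_smult (c * d) a"
  unfolding fa_smult_def by (simp add: mult.assoc)

lemma fa_smult_one [simp]: "fa_smult 1 a = a"
  unfolding fa_smult_def by simp

lemma fa_mult_nonzero_split:
  "fa_mult p q w \<noteq> 0 \<Longrightarrow> \<exists>u v. w = u @ v \<and> p u \<noteq> 0 \<and> q v \<noteq> 0"
proof -
  assume "fa_mult p q w \<noteq> 0"
  then obtain x where "x \<in> {(u, v). u @ v = w}" "p (fst x) * q (snd x) \<noteq> 0"
    unfolding fa_mult_def case_prod_beta by (meson sum.not_neutral_contains_not_neutral)
  then show ?thesis by (intro exI[of _ "fst x"] exI[of _ "snd x"]) auto
qed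

lemma fa_multI [simp]: "fa p \<Longrightarrow> fa q \<Longrightarrow> fa (fa_mult p q)"
proof -
  assume "fa p" "fa q"
  have "{w. fa_mult p q w \<noteq> 0} \<subseteq> (\<lambda>(u, v). u @ v) ` ({u. p u \<noteq> 0} \<times> {v. q v \<noteq> 0})"
    using fa_mult_nonzero_split by fastforce
  then show ?thesis using \<open>fa p\<close> \<open>fa q\<close> unfolding fa_def
    by (meson finite_SigmaI finite_imageI finite_subset)
qed

lemma fa_addI [simp]: "fa p \<Longrightarrow> fa q \<Longrightarrow> fa (fa_add p q)"
  unfolding fa_def fa_add_def
  by (rule finite_subset[where B="{w. p w \<noteq> 0} \<union> {w. q w \<noteq> 0}"]) auto

lemma fa_subI [simp]: "fa p \<Longrightarrow> fa q \<Longrightarrow> fa (fa_sub p q)"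
  unfolding fa_def fa_sub_def
  by (rule finite_subset[where B="{w. p w \<noteq> 0} \<union> {w. q w \<noteq> 0}"]) auto

lemma fa_smultI [simp]: "fa p \<Longrightarrow> fa (fa_smult c p)"
  unfolding fa_def fa_smult_def
  by (rule finite_subset[where B="{w. p w \<noteq> 0}"]) auto

lemma fa_oneI [simp]: "fa fa_one"
  unfolding fa_def fa_one_def by (rule finite_subset[where B="{[]}"]) auto

lemma fa_zeroI [simp]: "fa fa_zero"
  unfolding fa_def fa_zero_def by auto

lemma fa_genI [simp]: "fa (fa_gen g)"
  unfolding fa_def fa_gen_def by (rule finite_subset[where B="{[g]}"]) auto

lemma fa_powI [simp]: "fa p \<Longrightarrow> fa (fa_pow p n)"
  by (induction n) auto

lemma fa_pow_add: "fa_pow p (m + n) = fa_mult (fa_pow p m) (fa_pow p n)"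
  by (induction m) (auto simp: fa_mult_assoc)

lemma fa_pow_mult: "fa_pow p (m * n) = fa_pow (fa_pow p m) n"
  by (induction n) (simp_all add: fa_pow_add)

definition fa_word :: "'g list \<Rightarrow> 'g fa" where
  "fa_word u = (\<lambda>w. if w = u then 1 else 0)"

lemma fa_wordI [simp]: "fa (fa_word u)"
  unfolding fa_def fa_word_def by (rule finite_subset[where B="{u}"]) auto

lemma fa_gen_word: "fa_gen g = fa_word [g]"
  unfolding fa_gen_def fa_word_def by simp

lemma fa_one_word: "fa_one = fa_word []"
  unfolding fa_one_def fa_word_def by simp

lemma fa_word_mult: "fa_mult (fa_word u) (fa_word v) = fa_word (u @ v)"
proof (rule ext)
  fix w
  have "fa_mult (fa_word u) (fa_word v) w =
      (\<Sum>x\<in>{(u, v). u @ v = w}. if x = (u, v) then (if w = u @ v then 1 else 0) else 0)"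
    unfolding fa_mult_def fa_word_def by (rule sum.cong) (auto split: if_splits)
  also have "\<dots> = fa_word (u @ v) w"
    by (subst sum.delta) (auto simp: finite_append_splits fa_word_def)
  finally show "fa_mult (fa_word u) (fa_word v) w = fa_word (u @ v) w" .
qed

definition fa_sum :: "('i \<Rightarrow> 'g fa) \<Rightarrow> 'i set \<Rightarrow> 'g fa" where
  "fa_sum F S = (\<lambda>w. \<Sum>i\<in>S. F i w)"

lemma fa_sum_empty [simp]: "fa_sum F {} = fa_zero"
  unfolding fa_sum_def fa_zero_def by simp

lemma fa_sum_insert:
  "finite S \<Longrightarrow> i \<notin> S \<Longrightarrow> fa_sum F (insert i S) = fa_add (F i) (fa_sum F S)"
  unfolding fa_sum_def fa_add_def by simp

lemma fa_sumI [simp]: "finite S \<Longrightarrow> (\<And>i. i \<in> S \<Longrightarrow> fa (F i)) \<Longrightarrow> fa (fa_sum F S)"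
  by (induction S rule: finite_induct) (auto simp: fa_sum_insert)

lemma fa_expand_words: "fa t \<Longrightarrow> t = fa_sum (\<lambda>u. fa_smult (t u) (fa_word u)) {u. t u \<noteq> 0}"
proof (rule ext)
  fix w assume "fa t"
  then have fin: "finite {u. t u \<noteq> 0}" unfolding fa_def .
  have "fa_sum (\<lambda>u. fa_smult (t u) (fa_word u)) {u. t u \<noteq> 0} w =
      (\<Sum>u\<in>{u. t u \<noteq> 0}. if u = w then t w else 0)"
    unfolding fa_sum_def fa_smult_def fa_word_def by (rule sum.cong) auto
  also have "\<dots> = t w" using fin by (subst sum.delta) auto
  finally show "t w = fa_sum (\<lambda>u. fa_smult (t u) (fa_word u)) {u. t u \<noteq> 0} w" by simp
qed

section \<open>Congruence modulo a two-sided ideal\<close>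

lemma fa_ideal_fa: "a \<in> fa_ideal R \<Longrightarrow> (\<And>r. r \<in> R \<Longrightarrow> fa r) \<Longrightarrow> fa a"
  by (induction rule: fa_ideal.induct) auto

lemma fa_ideal_mult_left: "a \<in> fa_ideal R \<Longrightarrow> fa u \<Longrightarrow> fa_mult u a \<in> fa_ideal R"
  using fa_ideal.mult[of a R u fa_one] by simp

lemma fa_ideal_mult_right: "a \<in> fa_ideal R \<Longrightarrow> fa v \<Longrightarrow> fa_mult a v \<in> fa_ideal R"
  using fa_ideal.mult[of a R fa_one v] by simp

lemma fa_ideal_smult: "a \<in> fa_ideal R \<Longrightarrow> fa_smult c a \<in> fa_ideal R"
  using fa_ideal_mult_left[of a R "fa_smult c fa_one"] by (simp add: fa_mult_smult_left)

definition fa_cong :: "'g fa set \<Rightarrow> 'g fa \<Rightarrow> 'g fa \<Rightarrow> bool" where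
  "fa_cong R a b \<longleftrightarrow> fa_sub a b \<in> fa_ideal R"

lemma fa_cong_refl [simp]: "fa_cong R a a"
proof -
  have "fa_sub a a = fa_zero" unfolding fa_sub_def fa_zero_def by simp
  then show ?thesis unfolding fa_cong_def by (simp add: fa_ideal.zero)
qed

lemma fa_cong_rel: "fa_sub a b \<in> R \<Longrightarrow> fa_cong R a b"
  unfolding fa_cong_def by (rule fa_ideal.gen)

lemma fa_cong_sym: "fa_cong R a b \<Longrightarrow> fa_cong R b a"
proof -
  assume "fa_cong R a b"
  then have "fa_smult (-1) (fa_sub a b) \<in> fa_ideal R"
    unfolding fa_cong_def by (rule fa_ideal_smult)
  moreover have "fa_smult (-1) (fa_sub a b) = fa_sub b a"
    unfolding fa_smult_def fa_sub_def by auto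
  ultimately show ?thesis unfolding fa_cong_def by simp
qed

lemma fa_cong_trans [trans]: "fa_cong R a b \<Longrightarrow> fa_cong R b c \<Longrightarrow> fa_cong R a c"
proof -
  assume "fa_cong R a b" "fa_cong R b c"
  then have "fa_add (fa_sub a b) (fa_sub b c) \<in> fa_ideal R"
    unfolding fa_cong_def by (rule fa_ideal.add)
  moreover have "fa_add (fa_sub a b) (fa_sub b c) = fa_sub a c"
    unfolding fa_add_def fa_sub_def by auto
  ultimately show ?thesis unfolding fa_cong_def by simp
qed

lemma fa_cong_trans_eq_left [trans]: "a = b \<Longrightarrow> fa_cong R b c \<Longrightarrow> fa_cong R a c"
  by simp

lemma fa_cong_trans_eq_right [trans]: "fa_cong R a b \<Longrightarrow> b = c \<Longrightarrow> fa_cong R a c"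
  by simp

lemma fa_cong_add: "fa_cong R a b \<Longrightarrow> fa_cong R c d \<Longrightarrow> fa_cong R (fa_add a c) (fa_add b d)"
proof -
  assume "fa_cong R a b" "fa_cong R c d"
  then have "fa_add (fa_sub a b) (fa_sub c d) \<in> fa_ideal R"
    unfolding fa_cong_def by (rule fa_ideal.add)
  moreover have "fa_add (fa_sub a b) (fa_sub c d) = fa_sub (fa_add a c) (fa_add b d)"
    unfolding fa_add_def fa_sub_def by auto
  ultimately show ?thesis unfolding fa_cong_def by simp
qed

lemma fa_cong_smult: "fa_cong R a b \<Longrightarrow> fa_cong R (fa_smult c a) (fa_smult c b)"
proof -
  assume "fa_cong R a b"
  then have "fa_smult c (fa_sub a b) \<in> fa_ideal R"
    unfolding fa_cong_def by (rule fa_ideal_smult)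
  moreover have "fa_smult c (fa_sub a b) = fa_sub (fa_smult c a) (fa_smult c b)"
    unfolding fa_smult_def fa_sub_def by (auto simp: algebra_simps)
  ultimately show ?thesis unfolding fa_cong_def by simp
qed

lemma fa_cong_smult_cancel:
  assumes "c \<noteq> 0" "fa_cong R (fa_smult c a) (fa_smult c b)"
  shows "fa_cong R a b"
  using fa_cong_smult[OF assms(2), of "inverse c"] assms(1) by simp

lemma fa_cong_mult_left: "fa u \<Longrightarrow> fa_cong R a b \<Longrightarrow> fa_cong R (fa_mult u a) (fa_mult u b)"
  unfolding fa_cong_def by (metis fa_ideal_mult_left fa_mult_sub_right)

lemma fa_cong_mult_right: "fa v \<Longrightarrow> fa_cong R a b \<Longrightarrow> fa_cong R (fa_mult a v) (fa_mult b v)"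
  unfolding fa_cong_def by (metis fa_ideal_mult_right fa_mult_sub_left)

lemma fa_cong_sum:
  "finite S \<Longrightarrow> (\<And>i. i \<in> S \<Longrightarrow> fa_cong R (F i) (G i)) \<Longrightarrow> fa_cong R (fa_sum F S) (fa_sum G S)"
  by (induction S rule: finite_induct) (auto simp: fa_sum_insert fa_cong_add)

definition fa_qcomm :: "'g fa set \<Rightarrow> complex \<Rightarrow> 'g fa \<Rightarrow> 'g fa \<Rightarrow> bool" where
  "fa_qcomm R s c a \<longleftrightarrow> fa_cong R (fa_mult c a) (fa_smult s (fa_mult a c))"

lemma fa_qcomm_flip:
  assumes "fa_qcomm R s c a" "s \<noteq> 0"
  shows "fa_qcomm R (inverse s) a c"
  using fa_cong_sym[OF fa_cong_smult[OF assms(1)[unfolded fa_qcomm_def], of "inverse s"]] assms(2)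
  unfolding fa_qcomm_def by simp

lemma fa_qcomm_inverse_right:
  assumes inv: "fa_cong R (fa_mult a a') fa_one" "fa_cong R (fa_mult a' a) fa_one"
    and ca: "fa_qcomm R s c a" and s: "s \<noteq> 0" and fa: "fa a" "fa a'" "fa c"
  shows "fa_qcomm R (inverse s) c a'"
proof -
  have "fa_cong R (fa_mult c a') (fa_mult (fa_mult a' a) (fa_mult c a'))"
    using fa_cong_mult_right[OF _ inv(2), of "fa_mult c a'"] fa by (simp add: fa_cong_sym)
  also have "fa_mult (fa_mult a' a) (fa_mult c a') = fa_mult a' (fa_mult (fa_mult a c) a')"
    by (simp add: fa_mult_assoc)
  also have "fa_cong R \<dots> (fa_mult a' (fa_mult (fa_smult (inverse s) (fa_mult c a)) a'))"
    using fa_qcomm_flip[OF ca s] fa unfolding fa_qcomm_def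
    by (intro fa_cong_mult_left fa_cong_mult_right) auto
  also have "\<dots> = fa_smult (inverse s) (fa_mult (fa_mult a' c) (fa_mult a a'))"
    by (simp add: fa_mult_assoc fa_mult_smult_left fa_mult_smult_right)
  also have "fa_cong R \<dots> (fa_smult (inverse s) (fa_mult a' c))"
    using fa_cong_mult_left[OF _ inv(1), of "fa_mult a' c"] fa by (intro fa_cong_smult) simp
  finally show ?thesis unfolding fa_qcomm_def .
qed

lemma fa_qcomm_pow:
  assumes "fa_qcomm R s c a" "fa a" "fa c"
  shows "fa_qcomm R (s ^ n) c (fa_pow a n)"
  unfolding fa_qcomm_def
proof (induction n)
  case 0 then show ?case by simp
next
  case (Suc n)
  have "fa_mult c (fa_pow a (Suc n)) = fa_mult (fa_mult c a) (fa_pow a n)"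
    by (simp add: fa_mult_assoc)
  also have "fa_cong R \<dots> (fa_mult (fa_smult s (fa_mult a c)) (fa_pow a n))"
    using assms unfolding fa_qcomm_def by (intro fa_cong_mult_right) auto
  also have "\<dots> = fa_smult s (fa_mult a (fa_mult c (fa_pow a n)))"
    by (simp add: fa_mult_assoc fa_mult_smult_left)
  also have "fa_cong R \<dots> (fa_smult s (fa_mult a (fa_smult (s ^ n) (fa_mult (fa_pow a n) c))))"
    using Suc assms by (intro fa_cong_smult fa_cong_mult_left) auto
  also have "\<dots> = fa_smult (s ^ Suc n) (fa_mult (fa_pow a (Suc n)) c)"
    by (simp add: fa_mult_assoc fa_mult_smult_right)
  finally show ?case .
qed

lemma fa_qcomm_pass:
  assumes "fa_qcomm R s c A" "fa_cong R (fa_mult c B) (fa_smult t B')" "fa A" "fa B" "fa c"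
  shows "fa_cong R (fa_mult c (fa_mult A B)) (fa_smult (s * t) (fa_mult A B'))"
proof -
  have "fa_mult c (fa_mult A B) = fa_mult (fa_mult c A) B" by (simp add: fa_mult_assoc)
  also have "fa_cong R \<dots> (fa_mult (fa_smult s (fa_mult A c)) B)"
    using assms unfolding fa_qcomm_def by (intro fa_cong_mult_right) auto
  also have "\<dots> = fa_smult s (fa_mult A (fa_mult c B))"
    by (simp add: fa_mult_assoc fa_mult_smult_left)
  also have "fa_cong R \<dots> (fa_smult s (fa_mult A (fa_smult t B')))"
    using assms by (intro fa_cong_smult fa_cong_mult_left) auto
  also have "\<dots> = fa_smult (s * t) (fa_mult A B')"
    by (simp add: fa_mult_smult_right)
  finally show ?thesis .
qed

definition fa_zpow :: "'g fa \<Rightarrow> 'g fa \<Rightarrow> int \<Rightarrow> 'g fa" where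
  "fa_zpow a a' k = (if 0 \<le> k then fa_pow a (nat k) else fa_pow a' (nat (- k)))"

lemma fa_zpowI [simp]: "fa a \<Longrightarrow> fa a' \<Longrightarrow> fa (fa_zpow a a' k)"
  unfolding fa_zpow_def by auto

lemma fa_zpow_Suc:
  assumes "fa_cong R (fa_mult a a') fa_one" "fa a'"
  shows "fa_cong R (fa_mult a (fa_zpow a a' k)) (fa_zpow a a' (k + 1))"
proof (cases "0 \<le> k")
  case True
  then have "fa_mult a (fa_zpow a a' k) = fa_zpow a a' (k + 1)"
    unfolding fa_zpow_def by (simp add: nat_add_distrib)
  then show ?thesis by simp
next
  case False
  define n where "n = nat (- k - 1)"
  have n: "k = - int n - 1" using False unfolding n_def by simp
  then have "fa_mult a (fa_zpow a a' k) = fa_mult (fa_mult a a') (fa_pow a' n)"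
    unfolding fa_zpow_def by (simp add: fa_mult_assoc nat_add_distrib)
  also have "fa_cong R \<dots> (fa_mult fa_one (fa_pow a' n))"
    using assms by (intro fa_cong_mult_right) auto
  also have "fa_mult fa_one (fa_pow a' n) = fa_zpow a a' (k + 1)"
    using n unfolding fa_zpow_def by auto
  finally show ?thesis .
qed

lemma fa_zpow_swap: "fa_zpow a a' k = fa_zpow a' a (- k)"
  unfolding fa_zpow_def by auto

lemma fa_zpow_pred:
  assumes "fa_cong R (fa_mult a' a) fa_one" "fa a"
  shows "fa_cong R (fa_mult a' (fa_zpow a a' k)) (fa_zpow a a' (k - 1))"
  using fa_zpow_Suc[OF assms, of "- k"] by (simp add: fa_zpow_swap[of a a'])

lemma fa_qcomm_zpow:
  assumes "fa_qcomm R s c a" "fa_qcomm R s' c a'" "fa a" "fa a'" "fa c"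
  shows "\<exists>t. fa_qcomm R t c (fa_zpow a a' k)"
  unfolding fa_zpow_def using fa_qcomm_pow[OF assms(1,3,5)] fa_qcomm_pow[OF assms(2,4,5)] by auto

section \<open>Linear actions of the free algebra\<close>

type_synonym 'm vec = "'m \<Rightarrow> complex"

definition lin_op :: "('m vec \<Rightarrow> 'm vec) \<Rightarrow> bool" where
  "lin_op T \<longleftrightarrow> (\<forall>f g. T (\<lambda>m. f m + g m) = (\<lambda>m. T f m + T g m)) \<and>
                (\<forall>c f. T (\<lambda>m. c * f m) = (\<lambda>m. c * T f m))"

lemma lin_op_add: "lin_op T \<Longrightarrow> T (\<lambda>m. f m + g m) = (\<lambda>m. T f m + T g m)"
  unfolding lin_op_def by blast

lemma lin_op_scale: "lin_op T \<Longrightarrow> T (\<lambda>m. c * f m) = (\<lambda>m. c * T f m)"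
  unfolding lin_op_def by blast

lemma lin_op_zero: "lin_op T \<Longrightarrow> T (\<lambda>m. 0) = (\<lambda>m. 0)"
  using lin_op_scale[of T 0 "\<lambda>m. 0"] by simp

lemma lin_op_sum:
  assumes T: "lin_op T" and S: "finite S"
  shows "T (\<lambda>m. \<Sum>i\<in>S. c i * F i m) = (\<lambda>m. \<Sum>i\<in>S. c i * T (F i) m)"
  using S
proof (induction S rule: finite_induct)
  case empty then show ?case by (simp add: lin_op_zero[OF T])
next
  case (insert x S)
  have "T (\<lambda>m. \<Sum>i\<in>insert x S. c i * F i m) = T (\<lambda>m. c x * F x m + (\<Sum>i\<in>S. c i * F i m))"
    using insert by simp
  also have "\<dots> = (\<lambda>m. c x * T (F x) m + T (\<lambda>m. \<Sum>i\<in>S. c i * F i m) m)"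
    by (simp add: lin_op_add[OF T] lin_op_scale[OF T])
  finally show ?case using insert by simp
qed

lemma lin_op_id: "lin_op (\<lambda>f. f)"
  unfolding lin_op_def by simp

lemma lin_op_comp: "lin_op S \<Longrightarrow> lin_op T \<Longrightarrow> lin_op (\<lambda>f. S (T f))"
  unfolding lin_op_def by simp

definition act :: "('g list \<Rightarrow> 'm vec \<Rightarrow> 'm vec) \<Rightarrow> 'g fa \<Rightarrow> 'm vec \<Rightarrow> 'm vec" where
  "act Lw p f = (\<lambda>m. \<Sum>u\<in>{u. p u \<noteq> 0}. p u * Lw u f m)"

definition word_rep :: "('g list \<Rightarrow> 'm vec \<Rightarrow> 'm vec) \<Rightarrow> bool" where
  "word_rep Lw \<longleftrightarrow> (\<forall>u. lin_op (Lw u)) \<and> (\<forall>u v f. Lw (u @ v) f = Lw u (Lw v f))"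

lemma act_supset:
  assumes "finite S" "{u. p u \<noteq> 0} \<subseteq> S"
  shows "act Lw p f = (\<lambda>m. \<Sum>u\<in>S. p u * Lw u f m)"
  unfolding act_def by (rule ext, rule sum.mono_neutral_left) (use assms in auto)

lemma act_add: "fa p \<Longrightarrow> fa q \<Longrightarrow> act Lw (fa_add p q) f = (\<lambda>m. act Lw p f m + act Lw q f m)"
proof -
  assume "fa p" "fa q"
  let ?S = "{u. p u \<noteq> 0} \<union> {u. q u \<noteq> 0}"
  have fin: "finite ?S" using \<open>fa p\<close> \<open>fa q\<close> unfolding fa_def by simp
  show ?thesis
    by (subst (1 2 3) act_supset[OF fin]) (auto simp: fa_add_def sum.distrib distrib_right)
qed

lemma act_sub: "fa p \<Longrightarrow> fa q \<Longrightarrow> act Lw (fa_sub p q) f = (\<lambda>m. act Lw p f m - act Lw q f m)"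
proof -
  assume "fa p" "fa q"
  let ?S = "{u. p u \<noteq> 0} \<union> {u. q u \<noteq> 0}"
  have fin: "finite ?S" using \<open>fa p\<close> \<open>fa q\<close> unfolding fa_def by simp
  show ?thesis
    by (subst (1 2 3) act_supset[OF fin]) (auto simp: fa_sub_def sum_subtractf left_diff_distrib)
qed

lemma act_smult: "fa p \<Longrightarrow> act Lw (fa_smult c p) f = (\<lambda>m. c * act Lw p f m)"
proof -
  assume "fa p"
  have fin: "finite {u. p u \<noteq> 0}" using \<open>fa p\<close> unfolding fa_def by simp
  show ?thesis
    by (subst (1 2) act_supset[OF fin]) (auto simp: fa_smult_def sum_distrib_left mult.assoc)
qed

lemma act_zero: "act Lw fa_zero f = (\<lambda>m. 0)"
  unfolding act_def fa_zero_def by simp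

lemma act_word: "act Lw (fa_word u) f = Lw u f"
proof -
  have "act Lw (fa_word u) f = (\<lambda>m. \<Sum>w\<in>{u}. fa_word u w * Lw w f m)"
    by (rule act_supset) (auto simp: fa_word_def)
  then show ?thesis by (simp add: fa_word_def)
qed

lemma act_sum:
  "finite S \<Longrightarrow> (\<And>i. i \<in> S \<Longrightarrow> fa (F i)) \<Longrightarrow>
    act Lw (fa_sum F S) f = (\<lambda>m. \<Sum>i\<in>S. act Lw (F i) f m)"
proof (induction S rule: finite_induct)
  case empty then show ?case by (simp add: act_zero)
next
  case (insert x S) then show ?case by (simp add: fa_sum_insert act_add)
qed

lemma lin_op_act: "(\<And>u. lin_op (Lw u)) \<Longrightarrow> lin_op (act Lw p)"
  unfolding lin_op_def act_def
  by (auto simp: sum.distrib distrib_left sum_distrib_left mult.left_commute)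

lemma act_eq_if_words_eq: "(\<And>u. L1 u f = L2 u f) \<Longrightarrow> act L1 p f = act L2 p f"
  unfolding act_def by simp

lemma fa_mult_restrict:
  assumes "{u. p u \<noteq> 0} \<subseteq> P" "{u. q u \<noteq> 0} \<subseteq> Q" "finite P" "finite Q"
  shows "fa_mult p q w = (\<Sum>x\<in>{x \<in> P \<times> Q. fst x @ snd x = w}. p (fst x) * q (snd x))"
proof -
  have "fa_mult p q w = (\<Sum>x\<in>{(u, v). u @ v = w}. p (fst x) * q (snd x))"
    unfolding fa_mult_def by (simp add: case_prod_beta)
  also have "\<dots> = (\<Sum>x\<in>{(u, v). u @ v = w} \<inter> (P \<times> Q). p (fst x) * q (snd x))"
    by (rule sum.mono_neutral_right) (use assms in \<open>auto simp: finite_append_splits\<close>)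
  also have "\<dots> = (\<Sum>x\<in>{x \<in> P \<times> Q. fst x @ snd x = w}. p (fst x) * q (snd x))"
    by (rule sum.cong) auto
  finally show ?thesis .
qed

lemma act_mult:
  assumes W: "word_rep Lw" and "fa p" "fa q"
  shows "act Lw (fa_mult p q) f = act Lw p (act Lw q f)"
proof (rule ext)
  fix m
  let ?P = "{u. p u \<noteq> 0}" and ?Q = "{u. q u \<noteq> 0}"
  let ?c = "\<lambda>x. fst x @ snd x"
  have fP: "finite ?P" and fQ: "finite ?Q" using assms unfolding fa_def by auto
  let ?S = "?c ` (?P \<times> ?Q)"
  have fS: "finite ?S" using fP fQ by simp
  have supp: "{w. fa_mult p q w \<noteq> 0} \<subseteq> ?S"
  proof
    fix w assume "w \<in> {w. fa_mult p q w \<noteq> 0}"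
    then obtain u v where "w = u @ v" "p u \<noteq> 0" "q v \<noteq> 0" using fa_mult_nonzero_split by blast
    then show "w \<in> ?S" by (intro image_eqI[where x="(u, v)"]) auto
  qed
  have "act Lw (fa_mult p q) f m = (\<Sum>w\<in>?S. fa_mult p q w * Lw w f m)"
    by (subst act_supset[OF fS supp]) simp
  also have "\<dots> = (\<Sum>w\<in>?S. \<Sum>x\<in>{x \<in> ?P \<times> ?Q. ?c x = w}. p (fst x) * q (snd x) * Lw (?c x) f m)"
    by (rule sum.cong[OF refl], subst fa_mult_restrict[OF subset_refl subset_refl fP fQ])
       (auto simp: sum_distrib_right)
  also have "\<dots> = (\<Sum>x\<in>?P \<times> ?Q. p (fst x) * q (snd x) * Lw (?c x) f m)"
    by (rule sum.group) (use fP fQ in auto)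
  also have "\<dots> = (\<Sum>u\<in>?P. \<Sum>v\<in>?Q. p u * q v * Lw u (Lw v f) m)"
    using W unfolding word_rep_def by (simp add: sum.cartesian_product case_prod_beta)
  also have "\<dots> = act Lw p (act Lw q f) m"
  proof -
    have "Lw u (act Lw q f) = (\<lambda>m. \<Sum>v\<in>?Q. q v * Lw u (Lw v f) m)" for u
    proof -
      have "lin_op (Lw u)" using W unfolding word_rep_def by blast
      from lin_op_sum[OF this fQ, of q "\<lambda>v. Lw v f"] show ?thesis unfolding act_def by simp
    qed
    then show ?thesis unfolding act_def by (simp add: sum_distrib_left mult.assoc)
  qed
  finally show "act Lw (fa_mult p q) f m = act Lw p (act Lw q f) m" .
qed

lemma act_pow:
  assumes "word_rep Lw" "act Lw fa_one = (\<lambda>f. f)" "fa p"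
  shows "act Lw (fa_pow p n) f = (act Lw p ^^ n) f"
proof (induction n arbitrary: f)
  case 0 then show ?case using assms by simp
next
  case (Suc n) then show ?case using assms by (simp add: act_mult)
qed

lemma act_fa_ideal_eq_zero:
  assumes "a \<in> fa_ideal R" "word_rep Lw" "\<And>r. r \<in> R \<Longrightarrow> fa r"
    "\<And>r f. r \<in> R \<Longrightarrow> act Lw r f = (\<lambda>m. 0)"
  shows "act Lw a f = (\<lambda>m. 0)"
  using assms(1)
proof (induction arbitrary: f rule: fa_ideal.induct)
  case (gen r) then show ?case using assms by blast
next
  case zero then show ?case by (simp add: act_zero)
next
  case (add a b)
  have "fa a" "fa b" using add.hyps assms fa_ideal_fa by blast+
  then show ?case using add.IH by (simp add: act_add)
next
  case (mult a u v)
  have "fa a" using mult.hyps assms fa_ideal_fa by blast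
  then have "act Lw (fa_mult (fa_mult u a) v) f = act Lw u (act Lw a (act Lw v f))"
    using assms(2) mult.hyps by (simp add: act_mult)
  also have "\<dots> = (\<lambda>m. 0)"
  proof -
    have "lin_op (act Lw u)" using assms(2) unfolding word_rep_def by (intro lin_op_act) blast
    then show ?thesis using mult.IH by (simp add: lin_op_zero)
  qed
  finally show ?case .
qed

lemma act_commute:
  assumes "fa p" "lin_op T" "\<And>u f. Lw u (T f) = T (Lw u f)"
  shows "act Lw p (T f) = T (act Lw p f)"
proof -
  have fin: "finite {u. p u \<noteq> 0}" using assms unfolding fa_def by simp
  show ?thesis
    unfolding act_def using lin_op_sum[OF assms(2) fin, of p "\<lambda>u. Lw u f"] assms(3) by simp
qed

primrec word_op :: "('g \<Rightarrow> 'm vec \<Rightarrow> 'm vec) \<Rightarrow> 'g list \<Rightarrow> 'm vec \<Rightarrow> 'm vec" where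
  "word_op Lg [] f = f"
| "word_op Lg (g # u) f = Lg g (word_op Lg u f)"

primrec word_op_rev :: "('g \<Rightarrow> 'm vec \<Rightarrow> 'm vec) \<Rightarrow> 'g list \<Rightarrow> 'm vec \<Rightarrow> 'm vec" where
  "word_op_rev Rg [] f = f"
| "word_op_rev Rg (g # u) f = word_op_rev Rg u (Rg g f)"

lemma word_op_append: "word_op Lg (u @ v) f = word_op Lg u (word_op Lg v f)"
  by (induction u) auto

lemma lin_op_word_op: "(\<And>g. lin_op (Lg g)) \<Longrightarrow> lin_op (word_op Lg u)"
proof (induction u)
  case Nil then show ?case by (simp add: lin_op_id)
next
  case (Cons g u)
  have "lin_op (\<lambda>f. Lg g (word_op Lg u f))" by (rule lin_op_comp[OF Cons.prems Cons.IH[OF Cons.prems]])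
  moreover have "word_op Lg (g # u) = (\<lambda>f. Lg g (word_op Lg u f))" by (rule ext) simp
  ultimately show ?case by simp
qed

lemma lin_op_word_op_rev: "(\<And>g. lin_op (Rg g)) \<Longrightarrow> lin_op (word_op_rev Rg u)"
proof (induction u)
  case Nil then show ?case by (simp add: lin_op_id)
next
  case (Cons g u)
  have "lin_op (\<lambda>f. word_op_rev Rg u (Rg g f))"
    by (rule lin_op_comp[OF Cons.IH[OF Cons.prems] Cons.prems])
  moreover have "word_op_rev Rg (g # u) = (\<lambda>f. word_op_rev Rg u (Rg g f))" by (rule ext) simp
  ultimately show ?case by simp
qed

lemma word_rep_word_op: "(\<And>g. lin_op (Lg g)) \<Longrightarrow> word_rep (word_op Lg)"
  unfolding word_rep_def using lin_op_word_op word_op_append by blast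

lemma act_word_op_one: "act (word_op Lg) fa_one f = f"
  by (simp add: fa_one_word act_word)

lemma act_word_op_gen: "act (word_op Lg) (fa_gen g) f = Lg g f"
  by (simp add: fa_gen_word act_word)

lemma act_word_op_rev_gen: "act (word_op_rev Rg) (fa_gen g) f = Rg g f"
  by (simp add: fa_gen_word act_word)

lemma act_word_op_gen_mult: "act (word_op Lg) (fa_mult (fa_gen g) (fa_gen h)) f = Lg g (Lg h f)"
  by (simp add: fa_gen_word fa_word_mult act_word)

lemma word_evalI [simp]: "(\<And>g. fa (h g)) \<Longrightarrow> fa (word_eval h w)"
  by (induction w) auto

lemma word_eval_append: "word_eval h (u @ v) = fa_mult (word_eval h u) (word_eval h v)"
  by (induction u) (auto simp: fa_mult_assoc)

lemma fa_hom_as_sum: "fa_hom h p = fa_sum (\<lambda>w. fa_smult (p w) (word_eval h w)) {w. p w \<noteq> 0}"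
  unfolding fa_hom_def fa_sum_def fa_smult_def by simp

lemma fa_homI [simp]: "fa p \<Longrightarrow> (\<And>g. fa (h g)) \<Longrightarrow> fa (fa_hom h p)"
  unfolding fa_hom_as_sum by (rule fa_sumI) (auto simp: fa_def[of p])

lemma act_fa_hom:
  assumes "fa p" "\<And>g. fa (h g)"
  shows "act Lw (fa_hom h p) f = act (\<lambda>u. act Lw (word_eval h u)) p f"
proof -
  have fin: "finite {w. p w \<noteq> 0}" using assms unfolding fa_def by simp
  have "act Lw (fa_hom h p) f =
      (\<lambda>m. \<Sum>w\<in>{w. p w \<noteq> 0}. act Lw (fa_smult (p w) (word_eval h w)) f m)"
    unfolding fa_hom_as_sum by (rule act_sum) (use assms fin in auto)
  also have "\<dots> = (\<lambda>m. \<Sum>w\<in>{w. p w \<noteq> 0}. p w * act Lw (word_eval h w) f m)"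
    using assms by (simp add: act_smult)
  also have "\<dots> = act (\<lambda>u. act Lw (word_eval h u)) p f"
    by (simp only: act_def[where Lw="\<lambda>u. act Lw (word_eval h u)" and p=p])
  finally show ?thesis .
qed

lemma word_rep_fa_hom:
  assumes "word_rep Lw" "\<And>g. fa (h g)"
  shows "word_rep (\<lambda>u. act Lw (word_eval h u))"
  unfolding word_rep_def
proof (intro conjI allI)
  fix u show "lin_op (act Lw (word_eval h u))"
    using assms(1) unfolding word_rep_def by (intro lin_op_act) blast
next
  fix u v f
  show "act Lw (word_eval h (u @ v)) f = act Lw (word_eval h u) (act Lw (word_eval h v) f)"
    unfolding word_eval_append using assms by (intro act_mult) auto
qed



section \<open>The regular representation of W\<close>

definition omega :: "nat \<Rightarrow> complex" where
  "omega N = xi N ^ 2"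

lemma xi_cis: "xi N = cis (pi / real N)"
  unfolding xi_def cis_conv_exp by (simp add: mult.commute)

lemma omega_cis: "omega N = cis (2 * pi / real N)"
  unfolding omega_def xi_cis DeMoivre by simp

lemma omega_nonzero [simp]: "omega N \<noteq> 0"
  unfolding omega_cis by simp

lemma xi_nonzero [simp]: "xi N \<noteq> 0"
  unfolding xi_cis by simp

lemma xi_pow_N: "N \<ge> 1 \<Longrightarrow> xi N ^ N = -1"
  unfolding xi_cis DeMoivre by simp

lemma omega_powi_eq_1_iff: "N \<ge> 1 \<Longrightarrow> omega N powi k = 1 \<longleftrightarrow> int N dvd k"
proof -
  assume N: "N \<ge> 1"
  have "omega N powi k = 1 \<longleftrightarrow> (\<exists>n. 2 * pi * real_of_int k / real N = of_int n * (2 * pi))"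
    unfolding omega_cis cis_power_int cis_eq_1_iff by (simp add: mult.commute)
  also have "\<dots> \<longleftrightarrow> (\<exists>n. real_of_int k = of_int n * real N)"
    using N by (auto simp: field_simps)
  also have "\<dots> \<longleftrightarrow> (\<exists>n. k = n * int N)"
    by (metis of_int_eq_iff of_int_mult of_int_of_nat_eq)
  also have "\<dots> \<longleftrightarrow> int N dvd k" by (auto simp: dvd_def mult.commute)
  finally show ?thesis .
qed

lemma omega_pow_eq_1_iff: "N \<ge> 1 \<Longrightarrow> omega N ^ k = 1 \<longleftrightarrow> N dvd k"
  using omega_powi_eq_1_iff[of N "int k"] by simp

lemma power_int_shift_simps:
  fixes w :: complex
  assumes "w \<noteq> 0"
  shows "w powi (k + 1) = w powi k * w" "w powi (k - 1) = w powi k / w"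
    "w powi (- k) = inverse (w powi k)" "w powi (1 - k) = w / w powi k"
    "w powi (- k - 1) = inverse (w powi k * w)"
  using assms by (simp_all add: power_int_add power_int_diff power_int_minus field_simps)

text \<open>A function \<open>f :: W_vec\<close> stands for the formal sum of \<open>f (a, b, c) x\<^sup>a y\<^sup>b z\<^sup>c\<close>;
  \<^term>\<open>W_left w g\<close> and \<^term>\<open>W_right w g\<close> are left and right multiplication by the
  generator \<open>g\<close> when \<open>x y = w y x\<close>.\<close>

type_synonym W_vec = "(int \<times> int \<times> int) vec"

definition W_left :: "complex \<Rightarrow> wgen \<Rightarrow> W_vec \<Rightarrow> W_vec" where
  "W_left w g f = (\<lambda>(a, b, c). case g of
      WX \<Rightarrow> f (a - 1, b, c) | WXi \<Rightarrow> f (a + 1, b, c)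
    | WY \<Rightarrow> w powi (- a) * f (a, b - 1, c) | WYi \<Rightarrow> w powi a * f (a, b + 1, c)
    | WZ \<Rightarrow> f (a, b, c - 1) | WZi \<Rightarrow> f (a, b, c + 1))"

definition W_right :: "complex \<Rightarrow> wgen \<Rightarrow> W_vec \<Rightarrow> W_vec" where
  "W_right w g f = (\<lambda>(a, b, c). case g of
      WX \<Rightarrow> w powi (- b) * f (a - 1, b, c) | WXi \<Rightarrow> w powi b * f (a + 1, b, c)
    | WY \<Rightarrow> f (a, b - 1, c) | WYi \<Rightarrow> f (a, b + 1, c)
    | WZ \<Rightarrow> f (a, b, c - 1) | WZi \<Rightarrow> f (a, b, c + 1))"

lemma W_left_simps [simp]:
  "W_left w WX f (a, b, c) = f (a - 1, b, c)"
  "W_left w WXi f (a, b, c) = f (a + 1, b, c)"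
  "W_left w WY f (a, b, c) = w powi (- a) * f (a, b - 1, c)"
  "W_left w WYi f (a, b, c) = w powi a * f (a, b + 1, c)"
  "W_left w WZ f (a, b, c) = f (a, b, c - 1)"
  "W_left w WZi f (a, b, c) = f (a, b, c + 1)"
  unfolding W_left_def by simp_all

lemma W_right_simps [simp]:
  "W_right w WX f (a, b, c) = w powi (- b) * f (a - 1, b, c)"
  "W_right w WXi f (a, b, c) = w powi b * f (a + 1, b, c)"
  "W_right w WY f (a, b, c) = f (a, b - 1, c)"
  "W_right w WYi f (a, b, c) = f (a, b + 1, c)"
  "W_right w WZ f (a, b, c) = f (a, b, c - 1)"
  "W_right w WZi f (a, b, c) = f (a, b, c + 1)"
  unfolding W_right_def by simp_all

lemma W_vec_ext: "(\<And>a b c. f (a, b, c) = g (a, b, c)) \<Longrightarrow> f = g"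
  by (rule ext) auto

lemma lin_op_W_left: "lin_op (W_left w g)"
  unfolding lin_op_def by (cases g) (auto intro!: W_vec_ext simp: algebra_simps)

lemma lin_op_W_right: "lin_op (W_right w g)"
  unfolding lin_op_def by (cases g) (auto intro!: W_vec_ext simp: algebra_simps)

lemma W_left_right_commute: "w \<noteq> 0 \<Longrightarrow> W_left w g (W_right w h f) = W_right w h (W_left w g f)"
  by (rule W_vec_ext, cases g; cases h) (auto simp: power_int_shift_simps field_simps)

definition delta0 :: W_vec where
  "delta0 = (\<lambda>m. if m = (0, 0, 0) then 1 else 0)"

lemma delta0_apply: "delta0 (a, b, c) = (if a = 0 \<and> b = 0 \<and> c = 0 then 1 else 0)"
  unfolding delta0_def by simp

lemma W_left_delta0: "W_left w g delta0 = W_right w g delta0"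
  by (rule W_vec_ext, cases g) (auto simp: delta0_def)

abbreviation W_act :: "nat \<Rightarrow> wgen fa \<Rightarrow> W_vec \<Rightarrow> W_vec" where
  "W_act N \<equiv> act (word_op (W_left (omega N)))"

definition W_coeffs :: "nat \<Rightarrow> wgen fa \<Rightarrow> W_vec" where
  "W_coeffs N p = W_act N p delta0"

lemma word_rep_W: "word_rep (word_op (W_left w))"
  by (rule word_rep_word_op) (rule lin_op_W_left)

lemma act_W_mult: "fa p \<Longrightarrow> fa q \<Longrightarrow> W_act N (fa_mult p q) f = W_act N p (W_act N q f)"
  by (rule act_mult[OF word_rep_W])

lemma W_relsI: "r \<in> W_rels N \<Longrightarrow> fa r"
  unfolding W_rels_def Let_def by auto

lemma act_W_rel_eq_zero:
  assumes "r \<in> W_rels N"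
  shows "W_act N r f = (\<lambda>m. 0)"
  using assms unfolding W_rels_def Let_def
  apply (simp only: Un_iff insert_iff mem_Collect_eq empty_iff)
  apply (elim disjE exE conjE)
  by (auto intro!: W_vec_ext simp: act_sub act_smult act_word_op_gen_mult act_word_op_one
      omega_def[symmetric] power_int_shift_simps field_simps)

lemma act_W_ideal_eq_zero: "a \<in> W_ideal N \<Longrightarrow> W_act N a f = (\<lambda>m. 0)"
  unfolding W_ideal_def
  by (rule act_fa_ideal_eq_zero[OF _ word_rep_W]) (auto simp: W_relsI act_W_rel_eq_zero)

abbreviation "gX \<equiv> fa_gen WX"
abbreviation "gXi \<equiv> fa_gen WXi"
abbreviation "gY \<equiv> fa_gen WY"
abbreviation "gYi \<equiv> fa_gen WYi"
abbreviation "gZ \<equiv> fa_gen WZ"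
abbreviation "gZi \<equiv> fa_gen WZi"

lemma W_rels_inverse:
  "fa_cong (W_rels N) (fa_mult gX gXi) fa_one" "fa_cong (W_rels N) (fa_mult gXi gX) fa_one"
  "fa_cong (W_rels N) (fa_mult gY gYi) fa_one" "fa_cong (W_rels N) (fa_mult gYi gY) fa_one"
  "fa_cong (W_rels N) (fa_mult gZ gZi) fa_one" "fa_cong (W_rels N) (fa_mult gZi gZ) fa_one"
  by (rule fa_cong_rel; auto simp: W_rels_def Let_def)+

lemma W_rels_qcomm:
  "fa_qcomm (W_rels N) (omega N) gX gY"
  "g \<in> {gX, gXi, gY, gYi} \<Longrightarrow> fa_qcomm (W_rels N) 1 gZ g"
  unfolding fa_qcomm_def by (rule fa_cong_rel; auto simp: W_rels_def Let_def omega_def)+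

lemma W_qcomm_derived:
  "fa_qcomm (W_rels N) (inverse (omega N)) gY gX"
  "fa_qcomm (W_rels N) (omega N) gY gXi"
  "fa_qcomm (W_rels N) (omega N) gYi gX"
  "fa_qcomm (W_rels N) (inverse (omega N)) gYi gXi"
  "g \<in> {gX, gXi, gY, gYi} \<Longrightarrow> fa_qcomm (W_rels N) 1 gZi g"
proof -
  note inv = W_rels_inverse[where N=N] and qc = W_rels_qcomm[where N=N]
  show yx: "fa_qcomm (W_rels N) (inverse (omega N)) gY gX"
    by (rule fa_qcomm_flip[OF qc(1)]) simp
  show "fa_qcomm (W_rels N) (omega N) gY gXi"
    using fa_qcomm_inverse_right[OF inv(1,2) yx] by simp
  have "fa_qcomm (W_rels N) (inverse (omega N)) gX gYi"
    by (rule fa_qcomm_inverse_right[OF inv(3,4) qc(1)]) auto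
  from fa_qcomm_flip[OF this] show yix: "fa_qcomm (W_rels N) (omega N) gYi gX" by simp
  show "fa_qcomm (W_rels N) (inverse (omega N)) gYi gXi"
    by (rule fa_qcomm_inverse_right[OF inv(1,2) yix]) auto
  assume g: "g \<in> {gX, gXi, gY, gYi}"
  then have "fa_qcomm (W_rels N) 1 g gZ" using fa_qcomm_flip[OF qc(2)[OF g]] by simp
  then have "fa_qcomm (W_rels N) 1 g gZi" using fa_qcomm_inverse_right[OF inv(5,6)] g by fastforce
  then show "fa_qcomm (W_rels N) 1 gZi g" using fa_qcomm_flip by fastforce
qed

definition W_mon :: "int \<times> int \<times> int \<Rightarrow> wgen fa" where
  "W_mon = (\<lambda>(a, b, c). fa_mult (fa_zpow gX gXi a) (fa_mult (fa_zpow gY gYi b) (fa_zpow gZ gZi c)))"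

lemma W_mon_eq:
  "W_mon (a, b, c) = fa_mult (fa_zpow gX gXi a) (fa_mult (fa_zpow gY gYi b) (fa_zpow gZ gZi c))"
  unfolding W_mon_def by simp

lemma W_monI [simp]: "fa (W_mon m)"
  unfolding W_mon_def by (auto split: prod.splits)

lemma fa_cong_mult_assoc_step:
  "fa_cong R (fa_mult c A) A' \<Longrightarrow> fa B \<Longrightarrow> fa_cong R (fa_mult c (fa_mult A B)) (fa_smult 1 (fa_mult A' B))"
  using fa_cong_mult_right[of B R "fa_mult c A" A'] by (simp add: fa_mult_assoc)

lemma W_mon_mult_x:
  "fa_cong (W_rels N) (fa_mult gX (W_mon (a, b, c))) (fa_smult 1 (W_mon (a + 1, b, c)))"
  "fa_cong (W_rels N) (fa_mult gXi (W_mon (a, b, c))) (fa_smult 1 (W_mon (a - 1, b, c)))"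
  unfolding W_mon_eq
  by (rule fa_cong_mult_assoc_step[OF fa_zpow_Suc[OF W_rels_inverse(1)]]
      fa_cong_mult_assoc_step[OF fa_zpow_pred[OF W_rels_inverse(2)]]; simp)+

lemma W_mon_mult_y:
  "\<exists>s. fa_cong (W_rels N) (fa_mult gY (W_mon (a, b, c))) (fa_smult s (W_mon (a, b + 1, c)))"
  "\<exists>s. fa_cong (W_rels N) (fa_mult gYi (W_mon (a, b, c))) (fa_smult s (W_mon (a, b - 1, c)))"
proof -
  note qc = W_qcomm_derived[where N=N]
  obtain s where s: "fa_qcomm (W_rels N) s gY (fa_zpow gX gXi a)"
    using fa_qcomm_zpow[OF qc(1,2)] by auto
  have "fa_cong (W_rels N) (fa_mult gY (W_mon (a, b, c))) (fa_smult (s * 1) (W_mon (a, b + 1, c)))"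
    unfolding W_mon_eq
    by (rule fa_qcomm_pass[OF s fa_cong_mult_assoc_step[OF fa_zpow_Suc[OF W_rels_inverse(3)]]]) simp_all
  then show "\<exists>s. fa_cong (W_rels N) (fa_mult gY (W_mon (a, b, c))) (fa_smult s (W_mon (a, b + 1, c)))"
    by blast
  obtain s where s: "fa_qcomm (W_rels N) s gYi (fa_zpow gX gXi a)"
    using fa_qcomm_zpow[OF qc(3,4)] by auto
  have "fa_cong (W_rels N) (fa_mult gYi (W_mon (a, b, c))) (fa_smult (s * 1) (W_mon (a, b - 1, c)))"
    unfolding W_mon_eq
    by (rule fa_qcomm_pass[OF s fa_cong_mult_assoc_step[OF fa_zpow_pred[OF W_rels_inverse(4)]]]) simp_all
  then show "\<exists>s. fa_cong (W_rels N) (fa_mult gYi (W_mon (a, b, c))) (fa_smult s (W_mon (a, b - 1, c)))"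
    by blast
qed

lemma W_mon_mult_z:
  "\<exists>s. fa_cong (W_rels N) (fa_mult gZ (W_mon (a, b, c))) (fa_smult s (W_mon (a, b, c + 1)))"
  "\<exists>s. fa_cong (W_rels N) (fa_mult gZi (W_mon (a, b, c))) (fa_smult s (W_mon (a, b, c - 1)))"
proof -
  have qc: "fa_qcomm (W_rels N) 1 gZ g" "fa_qcomm (W_rels N) 1 gZi g"
    if "g \<in> {gX, gXi, gY, gYi}" for g
    using that W_rels_qcomm(2) W_qcomm_derived(5) by blast+
  obtain s t where s: "fa_qcomm (W_rels N) s gZ (fa_zpow gX gXi a)"
    and t: "fa_qcomm (W_rels N) t gZ (fa_zpow gY gYi b)"
    using fa_qcomm_zpow[of "W_rels N" 1 gZ gX 1 gXi a] fa_qcomm_zpow[of "W_rels N" 1 gZ gY 1 gYi b] qc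
    by auto
  have "fa_cong (W_rels N) (fa_mult gZ (fa_zpow gZ gZi c)) (fa_smult 1 (fa_zpow gZ gZi (c + 1)))"
    using fa_zpow_Suc[OF W_rels_inverse(5)] by simp
  then have "fa_cong (W_rels N) (fa_mult gZ (fa_mult (fa_zpow gY gYi b) (fa_zpow gZ gZi c)))
      (fa_smult (t * 1) (fa_mult (fa_zpow gY gYi b) (fa_zpow gZ gZi (c + 1))))"
    by (rule fa_qcomm_pass[OF t]) simp_all
  then have "fa_cong (W_rels N) (fa_mult gZ (W_mon (a, b, c))) (fa_smult (s * (t * 1)) (W_mon (a, b, c + 1)))"
    unfolding W_mon_eq by (rule fa_qcomm_pass[OF s]) simp_all
  then show "\<exists>s. fa_cong (W_rels N) (fa_mult gZ (W_mon (a, b, c))) (fa_smult s (W_mon (a, b, c + 1)))"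
    by blast
  obtain s t where s: "fa_qcomm (W_rels N) s gZi (fa_zpow gX gXi a)"
    and t: "fa_qcomm (W_rels N) t gZi (fa_zpow gY gYi b)"
    using fa_qcomm_zpow[of "W_rels N" 1 gZi gX 1 gXi a] fa_qcomm_zpow[of "W_rels N" 1 gZi gY 1 gYi b] qc
    by auto
  have "fa_cong (W_rels N) (fa_mult gZi (fa_zpow gZ gZi c)) (fa_smult 1 (fa_zpow gZ gZi (c - 1)))"
    using fa_zpow_pred[OF W_rels_inverse(6)] by simp
  then have "fa_cong (W_rels N) (fa_mult gZi (fa_mult (fa_zpow gY gYi b) (fa_zpow gZ gZi c)))
      (fa_smult (t * 1) (fa_mult (fa_zpow gY gYi b) (fa_zpow gZ gZi (c - 1))))"
    by (rule fa_qcomm_pass[OF t]) simp_all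
  then have "fa_cong (W_rels N) (fa_mult gZi (W_mon (a, b, c))) (fa_smult (s * (t * 1)) (W_mon (a, b, c - 1)))"
    unfolding W_mon_eq by (rule fa_qcomm_pass[OF s]) simp_all
  then show "\<exists>s. fa_cong (W_rels N) (fa_mult gZi (W_mon (a, b, c))) (fa_smult s (W_mon (a, b, c - 1)))"
    by blast
qed

lemma W_gen_mult_mon:
  "\<exists>s m'. fa_cong (W_rels N) (fa_mult (fa_gen g) (W_mon m)) (fa_smult s (W_mon m'))"
proof -
  obtain a b c where m: "m = (a, b, c)" by (cases m)
  show ?thesis
  proof (cases g)
    case WX then show ?thesis using W_mon_mult_x(1) unfolding m by blast
  next
    case WXi then show ?thesis using W_mon_mult_x(2) unfolding m by blast
  next
    case WY then show ?thesis using W_mon_mult_y(1) unfolding m by blast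
  next
    case WYi then show ?thesis using W_mon_mult_y(2) unfolding m by blast
  next
    case WZ then show ?thesis using W_mon_mult_z(1) unfolding m by blast
  next
    case WZi then show ?thesis using W_mon_mult_z(2) unfolding m by blast
  qed
qed

lemma W_word_cong_mon: "\<exists>s m. fa_cong (W_rels N) (fa_word u) (fa_smult s (W_mon m))"
proof (induction u)
  case Nil
  have "fa_word [] = fa_smult 1 (W_mon (0, 0, 0))"
    by (simp add: W_mon_eq fa_zpow_def fa_one_word[symmetric])
  then show ?case by (metis fa_cong_refl)
next
  case (Cons g u)
  then obtain s m where sm: "fa_cong (W_rels N) (fa_word u) (fa_smult s (W_mon m))" by blast
  obtain s' m' where sm': "fa_cong (W_rels N) (fa_mult (fa_gen g) (W_mon m)) (fa_smult s' (W_mon m'))"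
    using W_gen_mult_mon by blast
  have "fa_word (g # u) = fa_mult (fa_gen g) (fa_word u)"
    by (simp add: fa_gen_word fa_word_mult)
  also have "fa_cong (W_rels N) \<dots> (fa_mult (fa_gen g) (fa_smult s (W_mon m)))"
    by (rule fa_cong_mult_left[OF _ sm]) simp
  also have "\<dots> = fa_smult s (fa_mult (fa_gen g) (W_mon m))"
    by (simp add: fa_mult_smult_right)
  also have "fa_cong (W_rels N) \<dots> (fa_smult s (fa_smult s' (W_mon m')))"
    by (rule fa_cong_smult[OF sm'])
  also have "\<dots> = fa_smult (s * s') (W_mon m')" by simp
  finally show ?case by blast
qed

lemma W_cong_mon_comb:
  assumes "fa t"
  shows "\<exists>F c. finite F \<and> fa_cong (W_rels N) t (fa_sum (\<lambda>m. fa_smult (c m) (W_mon m)) F)"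
proof -
  let ?R = "W_rels N"
  have "\<forall>u. \<exists>p. fa_cong ?R (fa_word u) (fa_smult (fst p) (W_mon (snd p)))"
  proof
    fix u
    obtain s m where "fa_cong ?R (fa_word u) (fa_smult s (W_mon m))" using W_word_cong_mon by blast
    then show "\<exists>p. fa_cong ?R (fa_word u) (fa_smult (fst p) (W_mon (snd p)))"
      by (intro exI[of _ "(s, m)"]) simp
  qed
  then obtain P where "\<forall>u. fa_cong ?R (fa_word u) (fa_smult (fst (P u)) (W_mon (snd (P u))))"
    by (rule choice[THEN exE])
  then have P: "\<And>u. fa_cong ?R (fa_word u) (fa_smult (fst (P u)) (W_mon (snd (P u))))" by blast
  let ?U = "{u. t u \<noteq> 0}"
  have fin: "finite ?U" using assms unfolding fa_def .
  have "t = fa_sum (\<lambda>u. fa_smult (t u) (fa_word u)) ?U" by (rule fa_expand_words[OF assms])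
  also have "fa_cong ?R \<dots> (fa_sum (\<lambda>u. fa_smult (t u) (fa_smult (fst (P u)) (W_mon (snd (P u))))) ?U)"
    by (rule fa_cong_sum[OF fin]) (rule fa_cong_smult[OF P])
  also have "\<dots> = fa_sum (\<lambda>m. fa_smult (\<Sum>u\<in>{u \<in> ?U. snd (P u) = m}. t u * fst (P u)) (W_mon m))
                        (snd ` P ` ?U)"
  proof (rule ext)
    fix w
    have "fa_sum (\<lambda>u. fa_smult (t u) (fa_smult (fst (P u)) (W_mon (snd (P u))))) ?U w =
        (\<Sum>u\<in>?U. t u * fst (P u) * W_mon (snd (P u)) w)"
      unfolding fa_sum_def fa_smult_def by (simp add: mult.assoc)
    also have "\<dots> = (\<Sum>m\<in>snd ` P ` ?U. \<Sum>u\<in>{u \<in> ?U. snd (P u) = m}. t u * fst (P u) * W_mon (snd (P u)) w)"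
      by (rule sum.group[symmetric]) (use fin in auto)
    also have "\<dots> = (\<Sum>m\<in>snd ` P ` ?U. (\<Sum>u\<in>{u \<in> ?U. snd (P u) = m}. t u * fst (P u)) * W_mon m w)"
      by (rule sum.cong[OF refl]) (simp add: sum_distrib_right)
    finally show "fa_sum (\<lambda>u. fa_smult (t u) (fa_smult (fst (P u)) (W_mon (snd (P u))))) ?U w =
       fa_sum (\<lambda>m. fa_smult (\<Sum>u\<in>{u \<in> ?U. snd (P u) = m}. t u * fst (P u)) (W_mon m)) (snd ` P ` ?U) w"
      unfolding fa_sum_def fa_smult_def by simp
  qed
  finally have "fa_cong ?R t (fa_sum (\<lambda>m. fa_smult ((\<lambda>m. \<Sum>u\<in>{u \<in> ?U. snd (P u) = m}. t u * fst (P u)) m)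
      (W_mon m)) (snd ` P ` ?U))" by simp
  moreover have "finite (snd ` P ` ?U)" using fin by simp
  ultimately show ?thesis by (intro exI conjI)
qed

lemma W_left_funpow:
  fixes w :: complex
  shows "(W_left w WX ^^ n) f (a, b, c) = f (a - int n, b, c)"
    "(W_left w WXi ^^ n) f (a, b, c) = f (a + int n, b, c)"
    "(W_left w WY ^^ n) f (a, b, c) = (w powi (- a)) ^ n * f (a, b - int n, c)"
    "(W_left w WYi ^^ n) f (a, b, c) = (w powi a) ^ n * f (a, b + int n, c)"
    "(W_left w WZ ^^ n) f (a, b, c) = f (a, b, c - int n)"
    "(W_left w WZi ^^ n) f (a, b, c) = f (a, b, c + int n)"
  by (induction n arbitrary: a b c) (auto simp: algebra_simps)

lemma act_W_gen_pow: "W_act N (fa_pow (fa_gen g) n) f = (W_left (omega N) g ^^ n) f"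
proof -
  have "W_act N fa_one = (\<lambda>f. f)" by (rule ext) (simp add: act_word_op_one)
  moreover have "W_act N (fa_gen g) = W_left (omega N) g" by (rule ext) (simp add: act_word_op_gen)
  ultimately show ?thesis by (simp add: act_pow[OF word_rep_W])
qed

lemma act_W_zpow:
  "W_act N (fa_zpow gX gXi k) f (a, b, c) = f (a - k, b, c)"
  "W_act N (fa_zpow gY gYi k) f (a, b, c) =
     (if 0 \<le> k then (omega N powi (- a)) ^ nat k else (omega N powi a) ^ nat (- k)) * f (a, b - k, c)"
  "W_act N (fa_zpow gZ gZi k) f (a, b, c) = f (a, b, c - k)"
  unfolding fa_zpow_def by (auto simp: act_W_gen_pow W_left_funpow)

lemma W_coeffs_mon: "W_coeffs N (W_mon m) = (\<lambda>m'. if m' = m then 1 else 0)"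
proof (rule W_vec_ext)
  fix a b c
  obtain a0 b0 c0 where m: "m = (a0, b0, c0)" by (cases m)
  show "W_coeffs N (W_mon m) (a, b, c) = (if (a, b, c) = m then 1 else 0)"
    unfolding W_coeffs_def m W_mon_eq by (simp add: act_W_mult act_W_zpow delta0_def)
qed

lemma W_coeffs_sub:
  "fa p \<Longrightarrow> fa q \<Longrightarrow> W_coeffs N (fa_sub p q) = (\<lambda>m. W_coeffs N p m - W_coeffs N q m)"
  unfolding W_coeffs_def by (simp add: act_sub)

lemma W_coeffs_cong:
  assumes "fa_cong (W_rels N) p q" "fa p" "fa q"
  shows "W_coeffs N p = W_coeffs N q"
proof -
  have "W_coeffs N (fa_sub p q) = (\<lambda>m. 0)"
    using assms(1) act_W_ideal_eq_zero unfolding W_coeffs_def fa_cong_def W_ideal_def by blast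
  then have "(\<lambda>m. W_coeffs N p m - W_coeffs N q m) = (\<lambda>m. 0)"
    using W_coeffs_sub[OF assms(2,3), of N] by simp
  then show ?thesis by (simp add: fun_eq_iff)
qed

lemma W_cong_coeff_expansion:
  assumes "fa t"
  shows "\<exists>F. finite F \<and> (\<forall>m. m \<notin> F \<longrightarrow> W_coeffs N t m = 0) \<and>
             fa_cong (W_rels N) t (fa_sum (\<lambda>m. fa_smult (W_coeffs N t m) (W_mon m)) F)"
proof -
  obtain F c where F: "finite F"
    and tc: "fa_cong (W_rels N) t (fa_sum (\<lambda>m. fa_smult (c m) (W_mon m)) F)"
    using W_cong_mon_comb[OF assms] by blast
  have "W_coeffs N t = W_coeffs N (fa_sum (\<lambda>m. fa_smult (c m) (W_mon m)) F)"
    by (rule W_coeffs_cong[OF tc assms]) (use F in auto)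
  also have "\<dots> = (\<lambda>m'. if m' \<in> F then c m' else 0)"
    using F unfolding W_coeffs_def
    by (simp add: act_sum act_smult W_coeffs_mon[unfolded W_coeffs_def]
        if_distrib[of "\<lambda>x. c _ * x"] sum.delta' cong: if_cong)
  finally have coeffs: "W_coeffs N t = (\<lambda>m'. if m' \<in> F then c m' else 0)" .
  have "fa_sum (\<lambda>m. fa_smult (c m) (W_mon m)) F = fa_sum (\<lambda>m. fa_smult (W_coeffs N t m) (W_mon m)) F"
    unfolding fa_sum_def coeffs by (rule ext, rule sum.cong) auto
  then show ?thesis using F tc coeffs by auto
qed

lemma W_coeffs_finite: "fa t \<Longrightarrow> finite {m. W_coeffs N t m \<noteq> 0}"
proof -
  assume "fa t"
  then obtain F where "finite F" "\<forall>m. m \<notin> F \<longrightarrow> W_coeffs N t m = 0"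
    using W_cong_coeff_expansion by blast
  then show ?thesis by (metis (mono_tags, lifting) finite_subset mem_Collect_eq subsetI)
qed

lemma W_cong_iff_coeffs_eq:
  assumes "fa p" "fa q"
  shows "fa_cong (W_rels N) p q \<longleftrightarrow> W_coeffs N p = W_coeffs N q"
proof
  assume "W_coeffs N p = W_coeffs N q"
  then have zero: "W_coeffs N (fa_sub p q) = (\<lambda>m. 0)" using assms by (simp add: W_coeffs_sub)
  obtain F where "fa_cong (W_rels N) (fa_sub p q)
      (fa_sum (\<lambda>m. fa_smult (W_coeffs N (fa_sub p q) m) (W_mon m)) F)"
    using W_cong_coeff_expansion[of "fa_sub p q" N] assms by auto
  moreover have "fa_sum (\<lambda>m. fa_smult (W_coeffs N (fa_sub p q) m) (W_mon m)) F = fa_zero"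
    unfolding zero fa_sum_def fa_smult_def fa_zero_def by simp
  moreover have "fa_sub (fa_sub p q) fa_zero = fa_sub p q"
    unfolding fa_sub_def fa_zero_def by simp
  ultimately show "fa_cong (W_rels N) p q" unfolding fa_cong_def by simp
next
  assume "fa_cong (W_rels N) p q"
  then show "W_coeffs N p = W_coeffs N q" using W_coeffs_cong assms by blast
qed

lemma W_ideal_sub_iff_coeffs_eq:
  "fa p \<Longrightarrow> fa q \<Longrightarrow> fa_sub p q \<in> W_ideal N \<longleftrightarrow> W_coeffs N p = W_coeffs N q"
  using W_cong_iff_coeffs_eq unfolding fa_cong_def W_ideal_def by blast

section \<open>The centre of W\<close>

lemma word_op_W_right_commute:
  "w \<noteq> 0 \<Longrightarrow> word_op (W_left w) u (W_right w h f) = W_right w h (word_op (W_left w) u f)"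
  by (induction u) (auto simp: W_left_right_commute)

lemma word_op_word_op_rev_commute:
  "w \<noteq> 0 \<Longrightarrow> word_op (W_left w) u (word_op_rev (W_right w) v f) =
    word_op_rev (W_right w) v (word_op (W_left w) u f)"
  by (induction v arbitrary: f) (auto simp: word_op_W_right_commute)

lemma word_op_delta0: "w \<noteq> 0 \<Longrightarrow> word_op (W_left w) u delta0 = word_op_rev (W_right w) u delta0"
proof (induction u)
  case Nil then show ?case by simp
next
  case (Cons g u)
  have "word_op (W_left w) (g # u) delta0 = W_left w g (word_op_rev (W_right w) u delta0)"
    using Cons by simp
  also have "\<dots> = word_op_rev (W_right w) u (W_left w g delta0)"
    using word_op_word_op_rev_commute[OF Cons.prems, of "[g]" u delta0] by simp
  also have "\<dots> = word_op_rev (W_right w) (g # u) delta0" by (simp add: W_left_delta0)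
  finally show ?case .
qed

definition W_commuting :: "complex \<Rightarrow> W_vec \<Rightarrow> bool" where
  "W_commuting w f \<longleftrightarrow> (\<forall>g. W_left w g f = W_right w g f)"

lemma word_op_W_commuting:
  "W_commuting w f \<Longrightarrow> w \<noteq> 0 \<Longrightarrow> word_op (W_left w) u f = word_op_rev (W_right w) u f"
proof (induction u arbitrary: f)
  case Nil then show ?case by simp
next
  case (Cons g u)
  have "word_op (W_left w) (g # u) f = W_left w g (word_op_rev (W_right w) u f)" using Cons by simp
  also have "\<dots> = word_op_rev (W_right w) u (W_left w g f)"
    using word_op_word_op_rev_commute[OF Cons.prems(2), of "[g]" u f] by simp
  also have "\<dots> = word_op_rev (W_right w) (g # u) f"
    using Cons.prems unfolding W_commuting_def by simp
  finally show ?case .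
qed

lemma W_coeffs_mult_left: "fa p \<Longrightarrow> fa v \<Longrightarrow> W_coeffs N (fa_mult v p) = W_act N v (W_coeffs N p)"
  unfolding W_coeffs_def by (simp add: act_W_mult)

text \<open>\<open>v\<close> acts on \<^term>\<open>delta0\<close> in the same way from the left and from the right, and left
  and right operators commute.\<close>

lemma W_coeffs_mult_right:
  assumes "fa p" "fa v"
  shows "W_coeffs N (fa_mult p v) = act (word_op_rev (W_right (omega N))) v (W_coeffs N p)"
proof -
  let ?R = "word_op_rev (W_right (omega N))"
  have fin: "finite {u. v u \<noteq> 0}" using assms unfolding fa_def by simp
  have lin: "lin_op (W_act N p)" by (rule lin_op_act) (rule lin_op_word_op[OF lin_op_W_left])
  have "W_coeffs N (fa_mult p v) = W_act N p (W_act N v delta0)"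
    unfolding W_coeffs_def using assms by (simp add: act_W_mult)
  also have "W_act N v delta0 = act ?R v delta0"
    by (rule act_eq_if_words_eq) (simp add: word_op_delta0)
  also have "W_act N p (act ?R v delta0) = (\<lambda>m. \<Sum>u\<in>{u. v u \<noteq> 0}. v u * W_act N p (?R u delta0) m)"
    unfolding act_def[of ?R] by (rule lin_op_sum[OF lin fin])
  also have "\<dots> = (\<lambda>m. \<Sum>u\<in>{u. v u \<noteq> 0}. v u * ?R u (W_act N p delta0) m)"
  proof -
    have "W_act N p (?R u delta0) = ?R u (W_act N p delta0)" for u
      by (rule act_commute[OF assms(1) lin_op_word_op_rev[OF lin_op_W_right]])
         (simp add: word_op_word_op_rev_commute)
    then show ?thesis by simp
  qed
  also have "\<dots> = act ?R v (W_coeffs N p)" unfolding act_def W_coeffs_def by simp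
  finally show ?thesis .
qed

lemma W_commute_iff:
  assumes "fa w" "fa v"
  shows "fa_cong (W_rels N) (fa_mult w v) (fa_mult v w) \<longleftrightarrow>
    act (word_op_rev (W_right (omega N))) v (W_coeffs N w) = W_act N v (W_coeffs N w)"
  using assms by (simp add: W_cong_iff_coeffs_eq W_coeffs_mult_left[OF assms] W_coeffs_mult_right[OF assms])

lemma quot_central_W_iff:
  assumes "fa w"
  shows "quot_central (W_ideal N) w \<longleftrightarrow> W_commuting (omega N) (W_coeffs N w)"
proof
  assume "quot_central (W_ideal N) w"
  then have "fa_cong (W_rels N) (fa_mult w (fa_gen g)) (fa_mult (fa_gen g) w)" for g
    unfolding quot_central_def fa_cong_def W_ideal_def by simp
  then show "W_commuting (omega N) (W_coeffs N w)"
    using W_commute_iff[OF assms fa_genI]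
    unfolding W_commuting_def by (simp add: act_word_op_gen act_word_op_rev_gen)
next
  assume C: "W_commuting (omega N) (W_coeffs N w)"
  have "fa_cong (W_rels N) (fa_mult w v) (fa_mult v w)" if "fa v" for v
  proof -
    have "act (word_op_rev (W_right (omega N))) v (W_coeffs N w) = W_act N v (W_coeffs N w)"
      by (rule act_eq_if_words_eq) (simp add: word_op_W_commuting[OF C])
    then show ?thesis using W_commute_iff[OF assms that] by simp
  qed
  then show "quot_central (W_ideal N) w"
    using assms unfolding quot_central_def fa_cong_def W_ideal_def by simp
qed

definition lattice_supported :: "nat \<Rightarrow> W_vec \<Rightarrow> bool" where
  "lattice_supported N f \<longleftrightarrow> (\<forall>a b c. f (a, b, c) \<noteq> 0 \<longrightarrow> int N dvd a \<and> int N dvd b)"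

lemma lattice_supported_imp_W_commuting:
  assumes N: "N \<ge> 1" and S: "lattice_supported N f"
  shows "W_commuting (omega N) f"
  unfolding W_commuting_def
proof
  fix g
  have A: "f (a, b, c) = 0 \<or> (int N dvd a \<and> int N dvd b)" for a b c
    using S unfolding lattice_supported_def by blast
  have one: "int N dvd k \<Longrightarrow> omega N powi k = 1" for k
    using omega_powi_eq_1_iff[OF N] by blast
  show "W_left (omega N) g f = W_right (omega N) g f"
  proof (rule W_vec_ext)
    fix a b c
    show "W_left (omega N) g f (a, b, c) = W_right (omega N) g f (a, b, c)"
      using A[of "a - 1" b c] A[of "a + 1" b c] A[of a "b - 1" c] A[of a "b + 1" c]
        one[of "- b"] one[of b] one[of "- a"] one[of a]
      by (cases g) auto
  qed
qed

lemma W_commuting_x_dvd: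
  assumes N: "N \<ge> 1" and X: "W_left (omega N) WX f = W_right (omega N) WX f"
    and nz: "f (a, b, c) \<noteq> 0"
  shows "int N dvd b"
proof -
  have "f (a, b, c) = omega N powi (- b) * f (a, b, c)"
    using fun_cong[OF X, of "(a + 1, b, c)"] by simp
  then have "omega N powi (- b) = 1" using nz by simp
  then show ?thesis using omega_powi_eq_1_iff[OF N] by simp
qed

lemma W_commuting_y_dvd:
  assumes N: "N \<ge> 1" and Y: "W_left (omega N) WY f = W_right (omega N) WY f"
    and nz: "f (a, b, c) \<noteq> 0"
  shows "int N dvd a"
proof -
  have "omega N powi (- a) * f (a, b, c) = f (a, b, c)"
    using fun_cong[OF Y, of "(a, b + 1, c)"] by simp
  then have "omega N powi (- a) = 1" using nz by simp
  then show ?thesis using omega_powi_eq_1_iff[OF N] by simp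
qed

lemma W_commuting_imp_lattice_supported:
  "N \<ge> 1 \<Longrightarrow> W_commuting (omega N) f \<Longrightarrow> lattice_supported N f"
  unfolding W_commuting_def lattice_supported_def
  using W_commuting_x_dvd W_commuting_y_dvd by blast

lemma quot_central_one: "quot_central (fa_ideal R) fa_one"
  unfolding quot_central_def by (simp add: fa_cong_refl[unfolded fa_cong_def])

lemma quot_central_add:
  assumes "quot_central (fa_ideal R) a" "quot_central (fa_ideal R) b"
  shows "quot_central (fa_ideal R) (fa_add a b)"
  unfolding quot_central_def
proof (intro conjI allI impI)
  show "fa (fa_add a b)" using assms unfolding quot_central_def by simp
  fix v :: "'a fa" assume v: "fa v"
  have "fa_add (fa_sub (fa_mult a v) (fa_mult v a)) (fa_sub (fa_mult b v) (fa_mult v b)) \<in> fa_ideal R"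
    using assms v unfolding quot_central_def by (intro fa_ideal.add) auto
  moreover have "fa_add (fa_sub (fa_mult a v) (fa_mult v a)) (fa_sub (fa_mult b v) (fa_mult v b)) =
     fa_sub (fa_mult (fa_add a b) v) (fa_mult v (fa_add a b))"
    by (simp add: fa_mult_add_left fa_mult_add_right) (auto simp: fa_add_def fa_sub_def)
  ultimately show "fa_sub (fa_mult (fa_add a b) v) (fa_mult v (fa_add a b)) \<in> fa_ideal R" by simp
qed

lemma quot_central_smult:
  assumes "quot_central (fa_ideal R) a"
  shows "quot_central (fa_ideal R) (fa_smult c a)"
  unfolding quot_central_def
proof (intro conjI allI impI)
  show "fa (fa_smult c a)" using assms unfolding quot_central_def by simp
  fix v :: "'a fa" assume v: "fa v"
  have "fa_smult c (fa_sub (fa_mult a v) (fa_mult v a)) \<in> fa_ideal R"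
    using assms v unfolding quot_central_def by (intro fa_ideal_smult) auto
  moreover have "fa_smult c (fa_sub (fa_mult a v) (fa_mult v a)) =
     fa_sub (fa_mult (fa_smult c a) v) (fa_mult v (fa_smult c a))"
    by (simp add: fa_mult_smult_left fa_mult_smult_right)
       (auto simp: fa_smult_def fa_sub_def algebra_simps)
  ultimately show "fa_sub (fa_mult (fa_smult c a) v) (fa_mult v (fa_smult c a)) \<in> fa_ideal R" by simp
qed

lemma quot_central_mult:
  assumes "quot_central (fa_ideal R) a" "quot_central (fa_ideal R) b"
  shows "quot_central (fa_ideal R) (fa_mult a b)"
  unfolding quot_central_def
proof (intro conjI allI impI)
  show "fa (fa_mult a b)" using assms unfolding quot_central_def by simp
  fix v :: "'a fa" assume v: "fa v"
  have "fa_add (fa_mult a (fa_sub (fa_mult b v) (fa_mult v b)))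
      (fa_mult (fa_sub (fa_mult a v) (fa_mult v a)) b) \<in> fa_ideal R"
    using assms v unfolding quot_central_def
    by (intro fa_ideal.add fa_ideal_mult_left fa_ideal_mult_right) auto
  moreover have "fa_add (fa_mult a (fa_sub (fa_mult b v) (fa_mult v b)))
      (fa_mult (fa_sub (fa_mult a v) (fa_mult v a)) b) =
     fa_sub (fa_mult (fa_mult a b) v) (fa_mult v (fa_mult a b))"
    by (simp add: fa_mult_sub_left fa_mult_sub_right fa_mult_assoc) (auto simp: fa_add_def fa_sub_def)
  ultimately show "fa_sub (fa_mult (fa_mult a b) v) (fa_mult v (fa_mult a b)) \<in> fa_ideal R" by simp
qed

lemma fa_subalg_fa: "p \<in> fa_subalg S \<Longrightarrow> (\<And>s. s \<in> S \<Longrightarrow> fa s) \<Longrightarrow> fa p"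
  by (induction rule: fa_subalg.induct) auto

lemma fa_subalg_zero: "fa_zero \<in> fa_subalg S"
proof -
  have "fa_smult 0 fa_one = fa_zero" unfolding fa_smult_def fa_zero_def by simp
  then show ?thesis using fa_subalg.smult[OF fa_subalg.one, where c=0 and S=S] by metis
qed

lemma fa_subalg_pow: "s \<in> fa_subalg S \<Longrightarrow> fa_pow s n \<in> fa_subalg S"
  by (induction n) (auto intro: fa_subalg.one fa_subalg.mult)

lemma fa_subalg_sum:
  "finite F \<Longrightarrow> (\<And>i. i \<in> F \<Longrightarrow> G i \<in> fa_subalg S) \<Longrightarrow> fa_sum G F \<in> fa_subalg S"
  by (induction F rule: finite_induct) (auto simp: fa_sum_insert fa_subalg_zero intro: fa_subalg.add)

lemma fa_subalg_zpow_dvd: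
  assumes "fa_pow a N \<in> fa_subalg S" "fa_pow a' N \<in> fa_subalg S" "int N dvd k"
  shows "fa_zpow a a' k \<in> fa_subalg S"
proof -
  obtain j where k: "k = int N * j" using assms(3) by (auto simp: dvd_def)
  show ?thesis
  proof (cases "0 \<le> j")
    case True
    then have "fa_zpow a a' k = fa_pow (fa_pow a N) (nat j)"
      unfolding fa_zpow_def k fa_pow_mult[symmetric] by (simp add: nat_mult_distrib)
    then show ?thesis using assms fa_subalg_pow by metis
  next
    case False
    then have "fa_zpow a a' k = fa_pow (fa_pow a' N) (nat (- j))"
      unfolding fa_zpow_def k fa_pow_mult[symmetric] using nat_mult_distrib[of "int N" "- j"] by auto
    then show ?thesis using assms fa_subalg_pow by metis
  qed
qed

abbreviation W_center_gens :: "nat \<Rightarrow> wgen fa set" where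
  "W_center_gens N \<equiv> {gZ, gZi, fa_pow gX N, fa_pow gXi N, fa_pow gY N, fa_pow gYi N}"

lemma W_mon_subalg:
  assumes "int N dvd a" "int N dvd b"
  shows "W_mon (a, b, c) \<in> fa_subalg (W_center_gens N)"
proof -
  have "fa_zpow gX gXi a \<in> fa_subalg (W_center_gens N)" "fa_zpow gY gYi b \<in> fa_subalg (W_center_gens N)"
    by (rule fa_subalg_zpow_dvd[OF _ _ assms(1)] fa_subalg_zpow_dvd[OF _ _ assms(2)];
        auto intro: fa_subalg.gen)+
  moreover have "fa_zpow gZ gZi c \<in> fa_subalg (W_center_gens N)"
    unfolding fa_zpow_def by (auto intro: fa_subalg_pow fa_subalg.gen)
  ultimately show ?thesis unfolding W_mon_eq by (simp add: fa_subalg.mult)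
qed

lemma W_coeffs_gen_pow: "W_coeffs N (fa_pow (fa_gen g) n) = (W_left (omega N) g ^^ n) delta0"
  unfolding W_coeffs_def by (simp add: act_W_gen_pow)

lemma W_center_gens_central:
  assumes "N \<ge> 1" "s \<in> W_center_gens N"
  shows "quot_central (W_ideal N) s"
proof -
  have "W_coeffs N (fa_gen g) = W_left (omega N) g delta0" for g
    unfolding W_coeffs_def by (simp add: act_word_op_gen)
  moreover have "a + int N = 0 \<Longrightarrow> int N dvd a" for a
    by (metis add.commute add_eq_0_iff dvd_minus_iff dvd_refl)
  ultimately have "lattice_supported N (W_coeffs N s)"
    using assms(2) unfolding lattice_supported_def
    by (auto simp: W_coeffs_gen_pow W_left_funpow delta0_def split: if_splits)
  then show ?thesis
    using assms by (subst quot_central_W_iff) (auto intro!: lattice_supported_imp_W_commuting)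
qed

lemma fa_subalg_W_center_gens_central:
  assumes N: "N \<ge> 1" and p: "p \<in> fa_subalg (W_center_gens N)"
  shows "quot_central (W_ideal N) p"
  using p unfolding W_ideal_def
proof (induction rule: fa_subalg.induct)
  case one then show ?case by (rule quot_central_one)
next
  case (gen s) then show ?case using W_center_gens_central[OF N] unfolding W_ideal_def by blast
next
  case (add a b) show ?case by (rule quot_central_add[OF add.IH])
next
  case (smult a c) show ?case by (rule quot_central_smult[OF smult.IH])
next
  case (mult a b) show ?case by (rule quot_central_mult[OF mult.IH])
qed

theorem W_center:
  assumes N: "N \<ge> 1" and w: "fa w"
  shows "quot_central (W_ideal N) w \<longleftrightarrow> (\<exists>p \<in> fa_subalg (W_center_gens N). fa_sub w p \<in> W_ideal N)"
proof
  assume "quot_central (W_ideal N) w"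
  then have S: "lattice_supported N (W_coeffs N w)"
    using quot_central_W_iff[OF w] W_commuting_imp_lattice_supported[OF N] by blast
  obtain F where F: "finite F"
    and cong: "fa_cong (W_rels N) w (fa_sum (\<lambda>m. fa_smult (W_coeffs N w m) (W_mon m)) F)"
    using W_cong_coeff_expansion[OF w] by blast
  have "fa_smult (W_coeffs N w m) (W_mon m) \<in> fa_subalg (W_center_gens N)" for m
  proof (cases "W_coeffs N w m = 0")
    case True
    then have "fa_smult (W_coeffs N w m) (W_mon m) = fa_zero"
      unfolding fa_smult_def fa_zero_def by simp
    then show ?thesis using fa_subalg_zero by simp
  next
    case False
    obtain a b c where m: "m = (a, b, c)" by (cases m)
    then have "int N dvd a" "int N dvd b" using S False unfolding lattice_supported_def by auto
    then show ?thesis unfolding m by (intro fa_subalg.smult W_mon_subalg)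
  qed
  then have "fa_sum (\<lambda>m. fa_smult (W_coeffs N w m) (W_mon m)) F \<in> fa_subalg (W_center_gens N)"
    using F by (intro fa_subalg_sum) auto
  then show "\<exists>p \<in> fa_subalg (W_center_gens N). fa_sub w p \<in> W_ideal N"
    using cong unfolding fa_cong_def W_ideal_def by blast
next
  assume "\<exists>p \<in> fa_subalg (W_center_gens N). fa_sub w p \<in> W_ideal N"
  then obtain p where p: "p \<in> fa_subalg (W_center_gens N)" and wp: "fa_sub w p \<in> W_ideal N"
    by blast
  have fp: "fa p" using p by (rule fa_subalg_fa) auto
  have "W_coeffs N w = W_coeffs N p"
    using W_coeffs_cong[of N w p] wp w fp unfolding fa_cong_def W_ideal_def by simp
  then show "quot_central (W_ideal N) w"
    using fa_subalg_W_center_gens_central[OF N p] quot_central_W_iff[OF fp] quot_central_W_iff[OF w]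
    by simp
qed



section \<open>The map phi\<close>

definition U_rep :: "nat \<Rightarrow> ugen list \<Rightarrow> W_vec \<Rightarrow> W_vec" where
  "U_rep N u = W_act N (word_eval (phi_gen N) u)"

lemma phi_genI [simp]: "fa (phi_gen N g)"
  unfolding phi_gen_def by (cases g) auto

lemma phiI [simp]: "fa p \<Longrightarrow> fa (phi N p)"
  unfolding phi_def by (rule fa_homI) auto

lemma phi_gen_eq: "phi N (fa_gen g) = phi_gen N g"
proof -
  have "{w. fa_gen g w \<noteq> 0} = {[g]}" unfolding fa_gen_def by auto
  then show ?thesis unfolding phi_def fa_hom_def by (simp add: fa_gen_def)
qed

lemma word_rep_U: "word_rep (U_rep N)"
  unfolding U_rep_def by (rule word_rep_fa_hom[OF word_rep_W]) simp

lemma W_act_phi: "fa p \<Longrightarrow> W_act N (phi N p) f = act (U_rep N) p f"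
  unfolding phi_def U_rep_def by (rule act_fa_hom) auto

lemma W_coeffs_phi: "fa p \<Longrightarrow> W_coeffs N (phi N p) = act (U_rep N) p delta0"
  unfolding W_coeffs_def by (simp add: W_act_phi)

lemma act_U_mult:
  "fa p \<Longrightarrow> fa q \<Longrightarrow> act (U_rep N) (fa_mult p q) f = act (U_rep N) p (act (U_rep N) q f)"
  by (rule act_mult[OF word_rep_U])

lemma act_U_one: "act (U_rep N) fa_one f = f"
  by (simp add: fa_one_word act_word U_rep_def act_word_op_one)

lemma act_U_gen_simps:
  "act (U_rep N) (fa_gen UK) f (a, b, c) = f (a - 1, b, c)"
  "act (U_rep N) (fa_gen UKi) f (a, b, c) = f (a + 1, b, c)"
  "act (U_rep N) (fa_gen UE) f (a, b, c) =
     xi N * (omega N powi (- a) * (f (a, b - 1, c - 1) - f (a - 1, b - 1, c)))"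
  "act (U_rep N) (fa_gen UF) f (a, b, c) =
     omega N powi a * (f (a, b + 1, c) - f (a + 1, b + 1, c + 1))"
proof -
  have gen: "act (U_rep N) (fa_gen g) f = W_act N (phi_gen N g) f" for g f
    by (simp add: fa_gen_word act_word U_rep_def)
  show "act (U_rep N) (fa_gen UK) f (a, b, c) = f (a - 1, b, c)"
    "act (U_rep N) (fa_gen UKi) f (a, b, c) = f (a + 1, b, c)"
    "act (U_rep N) (fa_gen UE) f (a, b, c) =
       xi N * (omega N powi (- a) * (f (a, b - 1, c - 1) - f (a - 1, b - 1, c)))"
    "act (U_rep N) (fa_gen UF) f (a, b, c) =
       omega N powi a * (f (a, b + 1, c) - f (a + 1, b + 1, c + 1))"
    by (simp_all add: gen phi_gen_def act_word_op_gen act_smult act_W_mult act_sub act_word_op_one)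
qed

lemma U_relsI: "r \<in> U_rels N \<Longrightarrow> fa r"
  unfolding U_rels_def Let_def by auto

lemma act_U_rel_eq_zero:
  assumes "r \<in> U_rels N"
  shows "act (U_rep N) r f = (\<lambda>m. 0)"
proof -
  have q2: "omega N = xi N ^ 2" by (simp add: omega_def)
  from assms show ?thesis
    unfolding U_rels_def Let_def
    apply (simp only: insert_iff empty_iff)
    apply (elim disjE)
    by (auto intro!: W_vec_ext simp: act_sub act_smult act_U_mult act_U_one act_U_gen_simps
        power_int_shift_simps q2 field_simps power2_eq_square)
qed

lemma act_U_ideal_eq_zero: "a \<in> U_ideal N \<Longrightarrow> act (U_rep N) a f = (\<lambda>m. 0)"
  unfolding U_ideal_def
  by (rule act_fa_ideal_eq_zero[OF _ word_rep_U]) (auto simp: U_relsI act_U_rel_eq_zero)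

lemma phi_commute_if_central:
  assumes "quot_central (U_ideal N) u" "fa v"
  shows "fa_cong (W_rels N) (fa_mult (phi N u) (phi N v)) (fa_mult (phi N v) (phi N u))"
proof -
  have u: "fa u" using assms(1) unfolding quot_central_def by simp
  have "fa_sub (fa_mult u v) (fa_mult v u) \<in> U_ideal N"
    using assms unfolding quot_central_def by blast
  then have "act (U_rep N) (fa_sub (fa_mult u v) (fa_mult v u)) delta0 = (\<lambda>m. 0)"
    by (rule act_U_ideal_eq_zero)
  then have "act (U_rep N) u (act (U_rep N) v delta0) = act (U_rep N) v (act (U_rep N) u delta0)"
    using u assms(2) by (simp add: act_sub act_U_mult fun_eq_iff)
  then show ?thesis
    using u assms(2) by (simp add: W_cong_iff_coeffs_eq W_coeffs_def act_W_mult W_act_phi)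
qed

text \<open>Multiplication by \<open>z - s x\<close> has no kernel on finitely supported coefficient functions.\<close>

lemma diagonal_recurrence_finite_support_zero:
  fixes d :: W_vec
  assumes fin: "finite {m. d m \<noteq> 0}" and rec: "\<And>a b c. d (a, b, c - 1) = s * d (a - 1, b, c)"
  shows "d = (\<lambda>m. 0)"
proof (rule ccontr)
  assume "d \<noteq> (\<lambda>m. 0)"
  then obtain a b c where nz: "d (a, b, c) \<noteq> 0" by (metis ext prod_cases3)
  have diag: "d (a - int k, b, c + int k) \<noteq> 0" for k
  proof (induction k)
    case 0 then show ?case using nz by simp
  next
    case (Suc k)
    have "d (a - int k, b, c + int k) = s * d (a - int k - 1, b, c + int k + 1)"
      using rec[of "a - int k" b "c + int k + 1"] by simp
    then show ?case using Suc by (auto simp: algebra_simps)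
  qed
  have "inj (\<lambda>k::nat. (a - int k, b, c + int k))" by (rule injI) auto
  moreover have "range (\<lambda>k::nat. (a - int k, b, c + int k)) \<subseteq> {m. d m \<noteq> 0}" using diag by auto
  ultimately have "finite (UNIV :: nat set)" using fin by (meson finite_imageD finite_subset)
  then show False by simp
qed

lemma W_commute_x_coeffs:
  assumes "fa w" "fa_cong (W_rels N) (fa_mult w gX) (fa_mult gX w)"
  shows "W_left (omega N) WX (W_coeffs N w) = W_right (omega N) WX (W_coeffs N w)"
  using assms W_commute_iff[OF assms(1) fa_genI] by (simp add: act_word_op_gen act_word_op_rev_gen)

lemma W_commute_yzx_coeffs:
  assumes "fa w"
    and "fa_cong (W_rels N) (fa_mult w (fa_mult gY (fa_sub gZ gX))) (fa_mult (fa_mult gY (fa_sub gZ gX)) w)"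
  shows "W_coeffs N w (a, b, c - 1) - omega N powi (- (b + 1)) * W_coeffs N w (a - 1, b, c) =
    omega N powi (- a) * (W_coeffs N w (a, b, c - 1) - W_coeffs N w (a - 1, b, c))"
proof -
  have "act (word_op_rev (W_right (omega N))) (fa_mult gY (fa_sub gZ gX)) (W_coeffs N w) =
      W_act N (fa_mult gY (fa_sub gZ gX)) (W_coeffs N w)"
    using assms W_commute_iff[OF assms(1)] by simp
  from fun_cong[OF this, of "(a, b + 1, c)"] show ?thesis
    by (simp add: fa_mult_sub_right act_sub fa_gen_word fa_word_mult act_word right_diff_distrib)
qed

lemma coeff_relations_imp_lattice_supported:
  fixes A :: W_vec
  assumes N: "N \<ge> 1" and fin: "finite {m. A m \<noteq> 0}"
    and X: "W_left (omega N) WX A = W_right (omega N) WX A"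
    and E: "\<And>a b c. A (a, b, c - 1) - omega N powi (- (b + 1)) * A (a - 1, b, c) =
      omega N powi (- a) * (A (a, b, c - 1) - A (a - 1, b, c))"
  shows "lattice_supported N A"
proof -
  let ?w = "omega N"
  define d :: W_vec where "d = (\<lambda>(a, b, c). (1 - ?w powi (- a)) * A (a, b, c))"
  \<comment> \<open>\<open>z - q\<^sup>-\<^sup>1 x\<close> annihilates \<open>d\<close>\<close>
  have rec: "d (a, b, c - 1) = inverse ?w * d (a - 1, b, c)" for a b c
  proof -
    have "?w powi (- (b + 1)) = ?w powi (- b) * inverse ?w"
      using power_int_add[of ?w "- b" "- 1"] by simp
    moreover have "?w powi (- b) * A (a - 1, b, c) = A (a - 1, b, c)"
      using fun_cong[OF X, of "(a, b, c)"] by simp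
    ultimately have shift_b: "?w powi (- (b + 1)) * A (a - 1, b, c) = inverse ?w * A (a - 1, b, c)"
      by (metis mult.assoc mult.commute)
    have shift_a: "?w powi (- (a - 1)) = ?w powi (- a) * ?w"
      using power_int_add[of ?w "- a" 1] by simp
    have "d (a, b, c - 1) = A (a, b, c - 1) - ?w powi (- a) * A (a, b, c - 1)"
      unfolding d_def by (simp add: algebra_simps)
    also have "\<dots> = ?w powi (- (b + 1)) * A (a - 1, b, c) - ?w powi (- a) * A (a - 1, b, c)"
      using E[of a b c] by algebra
    also have "\<dots> = inverse ?w * d (a - 1, b, c)"
      unfolding shift_b d_def using shift_a by (simp add: field_simps)
    finally show ?thesis .
  qed
  have "{m. d m \<noteq> 0} \<subseteq> {m. A m \<noteq> 0}" unfolding d_def by auto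
  then have "d = (\<lambda>m. 0)"
    using diagonal_recurrence_finite_support_zero[OF _ rec] fin finite_subset by blast
  show ?thesis
    unfolding lattice_supported_def
  proof (intro allI impI conjI)
    fix a b c assume nz: "A (a, b, c) \<noteq> 0"
    have "(1 - ?w powi (- a)) * A (a, b, c) = 0"
      using fun_cong[OF \<open>d = (\<lambda>m. 0)\<close>, of "(a, b, c)"] unfolding d_def by simp
    then show "int N dvd a" using nz omega_powi_eq_1_iff[OF N, of "- a"] by simp
    show "int N dvd b" using W_commuting_x_dvd[OF N X nz] .
  qed
qed

lemma W_central_if_commutes_x_yzx:
  assumes N: "N \<ge> 1" and w: "fa w"
    and x: "fa_cong (W_rels N) (fa_mult w gX) (fa_mult gX w)"
    and e: "fa_cong (W_rels N) (fa_mult w (fa_mult gY (fa_sub gZ gX))) (fa_mult (fa_mult gY (fa_sub gZ gX)) w)"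
  shows "quot_central (W_ideal N) w"
proof -
  have "lattice_supported N (W_coeffs N w)"
    by (rule coeff_relations_imp_lattice_supported[OF N W_coeffs_finite[OF w]
          W_commute_x_coeffs[OF w x] W_commute_yzx_coeffs[OF w e]])
  then show ?thesis
    using quot_central_W_iff[OF w] lattice_supported_imp_W_commuting[OF N] by blast
qed

theorem phi_central:
  assumes N: "N \<ge> 1" and u: "quot_central (U_ideal N) u"
  shows "quot_central (W_ideal N) (phi N u)"
proof -
  have K: "phi N (fa_gen UK) = gX" and E: "phi N (fa_gen UE) = fa_smult (xi N) (fa_mult gY (fa_sub gZ gX))"
    by (simp_all add: phi_gen_eq phi_gen_def)
  have "fa_cong (W_rels N) (fa_mult (phi N u) gX) (fa_mult gX (phi N u))"
    using phi_commute_if_central[OF u fa_genI, of UK] unfolding K .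
  moreover have "fa_cong (W_rels N) (fa_mult (phi N u) (fa_mult gY (fa_sub gZ gX)))
      (fa_mult (fa_mult gY (fa_sub gZ gX)) (phi N u))"
    using xi_nonzero[of N] phi_commute_if_central[OF u fa_genI, of UE]
    unfolding E fa_mult_smult_left fa_mult_smult_right by (rule fa_cong_smult_cancel)
  moreover have "fa (phi N u)" using u unfolding quot_central_def by simp
  ultimately show ?thesis using W_central_if_commutes_x_yzx[OF N] by blast
qed



section \<open>The images of the N-th powers\<close>

lemma inj_on_omega_pow: "N \<ge> 1 \<Longrightarrow> inj_on (\<lambda>k. omega N ^ k) {..<N}"
proof (rule inj_onI)
  fix i j assume N: "N \<ge> 1" and i: "i \<in> {..<N}" and j: "j \<in> {..<N}"
    and eq: "omega N ^ i = omega N ^ j"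
  have "N dvd (l - k)" if "k < l" "omega N ^ k = omega N ^ l" for k l
  proof -
    have "omega N ^ l = omega N ^ k * omega N ^ (l - k)"
      using \<open>k < l\<close> by (simp add: power_add[symmetric])
    then show ?thesis using that omega_pow_eq_1_iff[OF N] by simp
  qed
  then show "i = j" using i j eq
    by (metis dvd_imp_le lessThan_iff linorder_neqE_nat zero_less_diff diff_le_self le_less_trans
        less_irrefl)
qed

definition root_prod_poly :: "nat \<Rightarrow> nat \<Rightarrow> complex poly" where
  "root_prod_poly N n = (\<Prod>k<n. [:- (omega N ^ k), 1:])"

definition root_prod_poly_rev :: "nat \<Rightarrow> nat \<Rightarrow> complex poly" where
  "root_prod_poly_rev N n = (\<Prod>k<n. [:1, - (omega N ^ k):])"

lemma root_prod_poly_N: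
  assumes N: "N \<ge> 1"
  shows "root_prod_poly N N = monom 1 N - 1"
proof (rule ccontr)
  let ?p = "root_prod_poly N N"
  let ?r = "monom (1::complex) N - 1"
  let ?D = "?r - ?p"
  assume "?p \<noteq> ?r"
  then have Dnz: "?D \<noteq> 0" by simp
  have degp: "degree ?p = N"
    unfolding root_prod_poly_def by (subst degree_prod_eq_sum_degree) auto
  have "coeff ?p N = 1"
    using lead_coeff_prod[of "\<lambda>k. [:- (omega N ^ k), 1:]" "{..<N}"] degp
    unfolding root_prod_poly_def by simp
  then have "coeff ?D N = 0" using N by simp
  moreover have "degree ?D \<le> N"
    using degp by (intro degree_diff_le) (auto simp: degree_monom_le)
  ultimately have "degree ?D < N" using Dnz by (metis le_neq_implies_less leading_coeff_0_iff)
  have roots: "(\<lambda>k. omega N ^ k) ` {..<N} \<subseteq> {x. poly ?D x = 0}"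
  proof
    fix x assume "x \<in> (\<lambda>k. omega N ^ k) ` {..<N}"
    then obtain k where k: "k < N" "x = omega N ^ k" by auto
    have "x ^ N = (omega N ^ N) ^ k" using k by (simp add: power_mult[symmetric] mult.commute)
    moreover have "omega N ^ N = 1" using omega_pow_eq_1_iff[OF N] by simp
    ultimately have "poly ?r x = 0" by (simp add: poly_monom)
    moreover have "poly ?p x = 0"
      unfolding root_prod_poly_def poly_prod using k by (intro prod_zero) (auto intro!: bexI[of _ k])
    ultimately show "x \<in> {x. poly ?D x = 0}" by simp
  qed
  have "N = card ((\<lambda>k. omega N ^ k) ` {..<N})" using card_image[OF inj_on_omega_pow[OF N]] by simp
  also have "\<dots> \<le> card {x. poly ?D x = 0}" by (rule card_mono[OF poly_roots_finite[OF Dnz] roots])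
  also have "\<dots> \<le> degree ?D" by (rule card_poly_roots_bound[OF Dnz])
  finally show False using \<open>degree ?D < N\<close> by simp
qed

lemma root_prod_poly_rev_N:
  assumes N: "N \<ge> 1"
  shows "root_prod_poly_rev N N = 1 - monom 1 N"
proof -
  have "poly (root_prod_poly_rev N N) t = poly (1 - monom 1 N) t" for t :: complex
  proof (cases "t = 0")
    case True then show ?thesis using N by (simp add: root_prod_poly_rev_def poly_prod poly_monom)
  next
    case False
    have "poly (root_prod_poly_rev N N) t = (\<Prod>k<N. t * (inverse t - omega N ^ k))"
      unfolding root_prod_poly_rev_def poly_prod using False
      by (intro prod.cong) (auto simp: field_simps)
    also have "\<dots> = t ^ N * poly (root_prod_poly N N) (inverse t)"
      by (simp add: prod.distrib root_prod_poly_def poly_prod)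
    also have "\<dots> = 1 - t ^ N" using False
      by (simp add: root_prod_poly_N[OF N] poly_monom algebra_simps power_inverse[symmetric]
          power_mult_distrib[symmetric])
    finally show ?thesis by (simp add: poly_monom)
  qed
  then show ?thesis using poly_eq_poly_eq_iff by blast
qed

lemma coeff_root_prod_poly_Suc:
  "coeff (root_prod_poly N (Suc n)) j =
    (if j = 0 then 0 else coeff (root_prod_poly N n) (j - 1)) - omega N ^ n * coeff (root_prod_poly N n) j"
proof -
  have "root_prod_poly N (Suc n) = [:- (omega N ^ n), 1:] * root_prod_poly N n"
    unfolding root_prod_poly_def by (simp add: mult.commute)
  then show ?thesis by (cases j) auto
qed

lemma coeff_root_prod_poly_rev_Suc:
  "coeff (root_prod_poly_rev N (Suc n)) j =
    coeff (root_prod_poly_rev N n) j - omega N ^ n * (if j = 0 then 0 else coeff (root_prod_poly_rev N n) (j - 1))"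
proof -
  have "root_prod_poly_rev N (Suc n) = [:1, - (omega N ^ n):] * root_prod_poly_rev N n"
    unfolding root_prod_poly_rev_def by (simp add: mult.commute)
  then show ?thesis by (cases j) auto
qed

lemma act_U_pow: "fa p \<Longrightarrow> act (U_rep N) (fa_pow p n) f = (act (U_rep N) p ^^ n) f"
  by (rule act_pow[OF word_rep_U]) (auto simp: act_U_one)

text \<open>The coefficients of \<open>(y (z - x))\<^sup>n = y\<^sup>n \<Prod>k<n. (z - q\<^sup>k x)\<close>, read off from the recursion
  for the product.\<close>

lemma U_E_funpow_delta0:
  "(act (U_rep N) (fa_gen UE) ^^ n) delta0 (a, b, c) =
     xi N ^ n * (omega N powi (- a)) ^ n *
     (if b = int n \<and> 0 \<le> c \<and> a + c = int n then coeff (root_prod_poly N n) (nat c) else 0)"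
proof (induction n arbitrary: a b c)
  case 0 then show ?case by (auto simp: delta0_def root_prod_poly_def)
next
  case (Suc n)
  let ?w = "omega N" and ?q = "xi N" and ?E = "act (U_rep N) (fa_gen UE)"
  have shift: "(?w powi (- (a - 1))) ^ n = (?w powi (- a)) ^ n * ?w ^ n"
    by (simp add: power_int_shift_simps field_simps power_mult_distrib)
  have "(?E ^^ Suc n) delta0 (a, b, c) =
     ?q * (?w powi (- a) * ((?E ^^ n) delta0 (a, b - 1, c - 1) - (?E ^^ n) delta0 (a - 1, b - 1, c)))"
    by (simp add: act_U_gen_simps)
  also have "\<dots> = ?q * (?w powi (- a) * (
        ?q ^ n * (?w powi (- a)) ^ n *
          (if b - 1 = int n \<and> 0 \<le> c - 1 \<and> a + (c - 1) = int n
           then coeff (root_prod_poly N n) (nat (c - 1)) else 0)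
      - ?q ^ n * ((?w powi (- a)) ^ n * ?w ^ n) *
          (if b - 1 = int n \<and> 0 \<le> c \<and> a - 1 + c = int n
           then coeff (root_prod_poly N n) (nat c) else 0)))"
    by (simp only: Suc.IH shift)
  also have "\<dots> = ?q ^ Suc n * (?w powi (- a)) ^ Suc n *
     (if b = int (Suc n) \<and> 0 \<le> c \<and> a + c = int (Suc n)
      then coeff (root_prod_poly N (Suc n)) (nat c) else 0)"
  proof (cases "b = int (Suc n) \<and> a + c = int (Suc n)")
    case False then show ?thesis by auto
  next
    case True
    consider "c \<ge> 1" | "c = 0" | "c < 0" by linarith
    then show ?thesis
    proof cases
      case 1
      then have "nat (c - 1) = nat c - 1" "nat c \<noteq> 0" by auto
      then show ?thesis using True 1 unfolding coeff_root_prod_poly_Suc by (simp add: algebra_simps)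
    next
      case 2
      then show ?thesis using True unfolding coeff_root_prod_poly_Suc by (simp add: algebra_simps)
    qed auto
  qed
  finally show ?case .
qed

lemma U_F_funpow_delta0:
  "(act (U_rep N) (fa_gen UF) ^^ n) delta0 (a, b, c) =
     (omega N powi a) ^ n *
     (if b = - int n \<and> a = c \<and> a \<le> 0 then coeff (root_prod_poly_rev N n) (nat (- a)) else 0)"
proof (induction n arbitrary: a b c)
  case 0 then show ?case by (auto simp: delta0_def root_prod_poly_rev_def)
next
  case (Suc n)
  let ?w = "omega N" and ?F = "act (U_rep N) (fa_gen UF)"
  have shift: "(?w powi (a + 1)) ^ n = (?w powi a) ^ n * ?w ^ n"
    by (simp add: power_int_add power_mult_distrib)
  have "(?F ^^ Suc n) delta0 (a, b, c) =
     ?w powi a * ((?F ^^ n) delta0 (a, b + 1, c) - (?F ^^ n) delta0 (a + 1, b + 1, c + 1))"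
    by (simp add: act_U_gen_simps)
  also have "\<dots> = ?w powi a * (
        (?w powi a) ^ n *
          (if b + 1 = - int n \<and> a = c \<and> a \<le> 0 then coeff (root_prod_poly_rev N n) (nat (- a)) else 0)
      - ((?w powi a) ^ n * ?w ^ n) *
          (if b + 1 = - int n \<and> a + 1 = c + 1 \<and> a + 1 \<le> 0
           then coeff (root_prod_poly_rev N n) (nat (- (a + 1))) else 0))"
    by (simp only: Suc.IH shift)
  also have "\<dots> = (?w powi a) ^ Suc n *
     (if b = - int (Suc n) \<and> a = c \<and> a \<le> 0 then coeff (root_prod_poly_rev N (Suc n)) (nat (- a)) else 0)"
  proof (cases "b = - int (Suc n) \<and> a = c")
    case False then show ?thesis by auto
  next
    case True
    consider "a \<le> -1" | "a = 0" | "a > 0" by linarith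
    then show ?thesis
    proof cases
      case 1
      then have "nat (- (a + 1)) = nat (- a) - 1" "nat (- a) \<noteq> 0" by auto
      then show ?thesis using True 1 unfolding coeff_root_prod_poly_rev_Suc by (simp add: algebra_simps)
    next
      case 2
      then show ?thesis using True unfolding coeff_root_prod_poly_rev_Suc by (simp add: algebra_simps)
    qed auto
  qed
  finally show ?case .
qed

theorem phi_K_pow:
  "fa_sub (phi N (fa_pow (fa_gen UK) N)) (fa_pow gX N) \<in> W_ideal N"
proof -
  have "act (U_rep N) (fa_gen UK) = W_left (omega N) WX"
    by (rule ext, rule W_vec_ext) (simp add: act_U_gen_simps)
  then show ?thesis by (simp add: W_ideal_sub_iff_coeffs_eq W_coeffs_phi act_U_pow W_coeffs_gen_pow)
qed

theorem phi_E_pow: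
  assumes N: "N \<ge> 1"
  shows "fa_sub (phi N (fa_pow (fa_gen UE) N)) (fa_mult (fa_pow gY N) (fa_sub (fa_pow gX N) (fa_pow gZ N)))
    \<in> W_ideal N"
proof -
  let ?P = "phi N (fa_pow (fa_gen UE) N)"
  let ?Q = "fa_mult (fa_pow gY N) (fa_sub (fa_pow gX N) (fa_pow gZ N))"
  have "W_coeffs N ?P (a, b, c) = W_coeffs N ?Q (a, b, c)" for a b c
  proof -
    let ?s = "(omega N powi (- a)) ^ N"
    have coeff_monom: "coeff (monom 1 N - 1 :: complex poly) j = (if N = j then 1 else 0) - (if j = 0 then 1 else 0)" for j
      by (simp add: coeff_diff)
    have "W_coeffs N ?P (a, b, c) = - ?s *
        (if b = int N \<and> 0 \<le> c \<and> a + c = int N then coeff (monom 1 N - 1) (nat c) else 0)"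
      by (simp add: W_coeffs_phi act_U_pow U_E_funpow_delta0 root_prod_poly_N[OF N] xi_pow_N[OF N])
    moreover have "W_coeffs N ?Q (a, b, c) =
        ?s * (delta0 (a - int N, b - int N, c) - delta0 (a, b - int N, c - int N))"
      unfolding W_coeffs_def by (simp add: act_W_mult act_sub act_W_gen_pow W_left_funpow)
    ultimately show ?thesis unfolding delta0_apply coeff_monom using N
      by (cases "b = int N"; cases "c = 0"; cases "c = int N"; cases "a + c = int N"; cases "0 \<le> c")
         (simp_all add: nat_eq_iff)
  qed
  then show ?thesis by (simp add: W_ideal_sub_iff_coeffs_eq W_vec_ext)
qed

theorem phi_F_pow:
  assumes N: "N \<ge> 1"
  shows "fa_sub (phi N (fa_pow (fa_gen UF) N))
      (fa_mult (fa_pow gYi N) (fa_sub fa_one (fa_mult (fa_pow gZi N) (fa_pow gXi N)))) \<in> W_ideal N"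
proof -
  let ?P = "phi N (fa_pow (fa_gen UF) N)"
  let ?Q = "fa_mult (fa_pow gYi N) (fa_sub fa_one (fa_mult (fa_pow gZi N) (fa_pow gXi N)))"
  have "W_coeffs N ?P (a, b, c) = W_coeffs N ?Q (a, b, c)" for a b c
  proof -
    let ?s = "(omega N powi a) ^ N"
    have coeff_monom: "coeff (1 - monom 1 N :: complex poly) j = (if j = 0 then 1 else 0) - (if N = j then 1 else 0)" for j
      by (simp add: coeff_diff)
    have "W_coeffs N ?P (a, b, c) = ?s *
        (if b = - int N \<and> a = c \<and> a \<le> 0 then coeff (1 - monom 1 N) (nat (- a)) else 0)"
      by (simp add: W_coeffs_phi act_U_pow U_F_funpow_delta0 root_prod_poly_rev_N[OF N])
    moreover have "W_coeffs N ?Q (a, b, c) =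
        ?s * (delta0 (a, b + int N, c) - delta0 (a + int N, b + int N, c + int N))"
      unfolding W_coeffs_def
      by (simp add: act_W_mult act_sub act_word_op_one act_W_gen_pow W_left_funpow)
    ultimately show ?thesis unfolding delta0_apply coeff_monom using N
      by (cases "b = - int N"; cases "a = 0"; cases "a = - int N"; cases "a = c"; cases "a \<le> 0")
         (simp_all add: nat_eq_iff)
  qed
  then show ?thesis by (simp add: W_ideal_sub_iff_coeffs_eq W_vec_ext)
qed

theorem lemma3p2:
  fixes N :: nat
  assumes "N \<ge> 2"
  shows
    "(\<forall>w. fa w \<longrightarrow>
        (quot_central (W_ideal N) w \<longleftrightarrow>
          (\<exists>p \<in> fa_subalg {fa_gen WZ, fa_gen WZi,
                            fa_pow (fa_gen WX) N, fa_pow (fa_gen WXi) N,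
                            fa_pow (fa_gen WY) N, fa_pow (fa_gen WYi) N}.
             fa_sub w p \<in> W_ideal N)))
     \<and> (\<forall>u. quot_central (U_ideal N) u \<longrightarrow> quot_central (W_ideal N) (phi N u))
     \<and> fa_sub (phi N (fa_pow (fa_gen UK) N)) (fa_pow (fa_gen WX) N) \<in> W_ideal N
     \<and> fa_sub (phi N (fa_pow (fa_gen UE) N))
          (fa_mult (fa_pow (fa_gen WY) N) (fa_sub (fa_pow (fa_gen WX) N) (fa_pow (fa_gen WZ) N)))
        \<in> W_ideal N
     \<and> fa_sub (phi N (fa_pow (fa_gen UF) N))
          (fa_mult (fa_pow (fa_gen WYi) N)
             (fa_sub fa_one (fa_mult (fa_pow (fa_gen WZi) N) (fa_pow (fa_gen WXi) N))))
        \<in> W_ideal N"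
proof -
  have N: "N \<ge> 1" using assms by simp
  show ?thesis
    using W_center[OF N] phi_central[OF N] phi_K_pow phi_E_pow[OF N] phi_F_pow[OF N] by blast
qed

end
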